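(* Assume (A1), (B1) and (B2). Let $c(\beta)$ denote the optimal value of $(\mathrm{P}_\beta)$. Then, as $n\to\infty$, $$r_n\big(c(b_n)-c(b)\big)\xrightarrow{D}\max_{1\le k\le K}G^T\lambda(I_k)=\max_{\lambda\text{ optimal for }(\mathrm{D}_b)}G^T\lambda.$$
   Context: $A\in\mathbb{R}^{m\times d}$ of full rank $m\le d$, $b\in\mathbb{R}^m$, $c\in\mathbb{R}^d$. $(\mathrm{P}_\beta)$: $\min c^Tx$ s.t. $Ax=\beta,x\ge0$; $(\mathrm{D}_\beta)$: $\max\beta^T\lambda$ s.t. $A^T\lambda\le c$. A basis is $I\subseteq[d]$, $|I|=m$, $A_I$ invertible; $x(I,\beta)$ has coordinates $(A_I)^{-1}\beta$ on $I$ and $0$ elsewhere; $\lambda(I)=(A_I)^{-T}c_I$; $I$ is dual feasible if $A^T\lambda(I)\le c$. $I_1,\dots,I_K$ are exactly the dual feasible bases with $x(I_k,b)\ge0$ (so the $\lambda(I_k)$ are the dual optimal basic solutions arising from primal–dual optimal bases). (A1): the optimal set of $(\mathrm{P}_b)$ is non-empty and bounded. Stochastic: $r_n\to\infty$, $m_0\in[m]$, random $b_n$ agreeing with $b$ in the last $m-m_0$ coordinates; (B1): $r_n(b_n-b)\xrightarrow{D}G=(G^{m_0},0)$ with $G^{m_0}$ absolutely continuous on $\mathbb{R}^{m_0}$; (B2): $\mathbb{P}((\mathrm{P}_{b_n})\text{ has an optimal solution})\to1$. *)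

theory Defs
  imports "HOL-Analysis.Analysis" "HOL-Probability.Probability"
begin

text \<open>Linear programs (P_beta): min c.x s.t. A x = beta, x >= 0, with
  A :: real^'d^'m (m rows indexed by 'm, d columns indexed by 'd).\<close>

definition primal_feasible :: "real^'d^'m \<Rightarrow> real^'m \<Rightarrow> real^'d \<Rightarrow> bool" where
  "primal_feasible A \<beta> x \<longleftrightarrow> A *v x = \<beta> \<and> (\<forall>j. 0 \<le> x $ j)"

definition primal_optimal :: "real^'d^'m \<Rightarrow> real^'d \<Rightarrow> real^'m \<Rightarrow> real^'d \<Rightarrow> bool" where
  "primal_optimal A c \<beta> x \<longleftrightarrow> primal_feasible A \<beta> x \<and>
     (\<forall>y. primal_feasible A \<beta> y \<longrightarrow> c \<bullet> x \<le> c \<bullet> y)"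

definition has_optimal :: "real^'d^'m \<Rightarrow> real^'d \<Rightarrow> real^'m \<Rightarrow> bool" where
  "has_optimal A c \<beta> \<longleftrightarrow> (\<exists>x. primal_optimal A c \<beta> x)"

text \<open>Optimal value c(beta) (a real number; meaningful when (P_beta) has an optimal solution).\<close>
definition opt_value :: "real^'d^'m \<Rightarrow> real^'d \<Rightarrow> real^'m \<Rightarrow> real" where
  "opt_value A c \<beta> = Inf {c \<bullet> x | x. primal_feasible A \<beta> x}"

definition dual_feasible :: "real^'d^'m \<Rightarrow> real^'d \<Rightarrow> real^'m \<Rightarrow> bool" where
  "dual_feasible A c l \<longleftrightarrow> (\<forall>j. (transpose A *v l) $ j \<le> c $ j)"

definition dual_optimal :: "real^'d^'m \<Rightarrow> real^'d \<Rightarrow> real^'m \<Rightarrow> real^'m \<Rightarrow> bool" where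
  "dual_optimal A c \<beta> l \<longleftrightarrow> dual_feasible A c l \<and>
     (\<forall>\<mu>. dual_feasible A c \<mu> \<longrightarrow> \<beta> \<bullet> \<mu> \<le> \<beta> \<bullet> l)"

definition is_basis :: "real^'d^'m \<Rightarrow> 'd set \<Rightarrow> bool" where
  "is_basis A I \<longleftrightarrow> card I = CARD('m) \<and> inj_on (\<lambda>j. column j A) I \<and>
     independent ((\<lambda>j. column j A) ` I)"

definition basic_primal :: "real^'d^'m \<Rightarrow> 'd set \<Rightarrow> real^'m \<Rightarrow> real^'d" where
  "basic_primal A I \<beta> = (THE x. (\<forall>j. j \<notin> I \<longrightarrow> x $ j = 0) \<and> A *v x = \<beta>)"

definition basic_dual :: "real^'d^'m \<Rightarrow> real^'d \<Rightarrow> 'd set \<Rightarrow> real^'m" where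
  "basic_dual A c I = (THE l. \<forall>j\<in>I. (transpose A *v l) $ j = c $ j)"

text \<open>The bases I_1..I_K: dual feasible bases with x(I,b) >= 0.\<close>
definition optimal_bases :: "real^'d^'m \<Rightarrow> real^'m \<Rightarrow> real^'d \<Rightarrow> 'd set set" where
  "optimal_bases A b c = {I. is_basis A I \<and> dual_feasible A c (basic_dual A c I) \<and>
     (\<forall>j. 0 \<le> basic_primal A I b $ j)}"

definition conv_in_distr :: "'a measure \<Rightarrow> (nat \<Rightarrow> 'a \<Rightarrow> 'b::metric_space) \<Rightarrow> 'c measure \<Rightarrow> ('c \<Rightarrow> 'b) \<Rightarrow> bool" where
  "conv_in_distr M X N Y \<longleftrightarrow>
     (\<forall>f::'b \<Rightarrow> real. continuous_on UNIV f \<and> bounded (range f) \<longrightarrow>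
        (\<lambda>n. \<integral>\<omega>. f (X n \<omega>) \<partial>M) \<longlonglongrightarrow> (\<integral>\<omega>. f (Y \<omega>) \<partial>N))"

end

theory Submission
  imports Defs
begin

text \<open>Near \<open>b\<close> the optimal value is the maximum of finitely many linear functions, one for each
  optimal basis of \<open>b\<close>. Indeed, every solvable \<open>(P\<^sub>\<beta>)\<close> has a primal-dual optimal basis \<open>I\<close>
  (strong duality realised by basic solutions), and since \<open>\<beta> \<mapsto> x(I,\<beta>)\<close> is linear, such a
  basis has \<open>x(I,b) \<ge> 0\<close> once \<open>\<beta>\<close> is close to \<open>b\<close>. Hence \<open>c(\<beta>) - c(b) = max\<^sub>k (\<beta> - b)\<cdot>\<lambda>(I\<^sub>k)\<close>
  there, and \<open>r\<^sub>n(c(b\<^sub>n) - c(b))\<close> is a fixed continuous, positively homogeneous function of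
  \<open>r\<^sub>n(b\<^sub>n - b)\<close> outside the events where the problem at \<open>b\<^sub>n\<close> is unsolvable or \<open>b\<^sub>n\<close> is far from \<open>b\<close>;
  both have vanishing probability by (B2) and tightness of \<open>r\<^sub>n(b\<^sub>n - b)\<close>. The continuous mapping
  theorem gives the limit. For the identification with the dual optimal set, weak duality shows
  \<open>g\<cdot>\<lambda> \<le> max\<^sub>k g\<cdot>\<lambda>(I\<^sub>k)\<close> for every dual optimal \<open>\<lambda>\<close> and every such \<open>g = r\<^sub>n(b\<^sub>n - b)\<close>; this
  closed condition passes to the limit \<open>G\<close> almost surely, and each \<open>\<lambda>(I\<^sub>k)\<close> is dual optimal.\<close>

section \<open>Bases and basic solutions\<close>

definition independent_columns :: "real^'d^'m \<Rightarrow> 'd set \<Rightarrow> bool" where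
  "independent_columns A S \<longleftrightarrow> (\<forall>y. (\<forall>j. j \<notin> S \<longrightarrow> y $ j = 0) \<and> A *v y = 0 \<longrightarrow> y = 0)"

lemma matrix_vector_mult_supported:
  fixes A :: "real^'d^'m"
  assumes "\<And>j. j \<notin> S \<Longrightarrow> y $ j = 0"
  shows "A *v y = (\<Sum>j\<in>S. y $ j *\<^sub>R column j A)"
proof -
  have "A *v y = (\<Sum>j\<in>UNIV. y $ j *\<^sub>R column j A)"
    by (simp add: matrix_mult_sum scalar_mult_eq_scaleR)
  also have "\<dots> = (\<Sum>j\<in>S. y $ j *\<^sub>R column j A)"
    by (rule sum.mono_neutral_right) (auto simp: assms)
  finally show ?thesis .
qed

lemma transpose_mult_vec_nth: "(transpose A *v l) $ j = column j A \<bullet> (l::real^'m)"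
  for A :: "real^'d^'m"
  by (simp add: matrix_vector_mult_def transpose_def column_def inner_vec_def mult.commute)

lemma inner_matrix_vector_mult: "(A *v x) \<bullet> l = (\<Sum>j\<in>UNIV. x $ j * (column j A \<bullet> l))"
  for A :: "real^'d^'m"
  by (simp add: matrix_mult_sum scalar_mult_eq_scaleR inner_sum_left)

lemma dual_feasible_iff_columns: "dual_feasible A c l \<longleftrightarrow> (\<forall>j. column j A \<bullet> l \<le> c $ j)"
  for A :: "real^'d^'m"
  unfolding dual_feasible_def transpose_mult_vec_nth ..

lemma independent_columnsD:
  fixes A :: "real^'d^'m"
  assumes h: "independent_columns A I"
  shows "inj_on (\<lambda>j. column j A) I" "independent ((\<lambda>j. column j A) ` I)"
proof -
  show inj: "inj_on (\<lambda>j. column j A) I"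
  proof (rule inj_onI, rule ccontr)
    fix i j assume ij: "i \<in> I" "j \<in> I" "column i A = column j A" "i \<noteq> j"
    define y :: "real^'d" where "y = axis i 1 - axis j 1"
    have "A *v y = 0"
      using ij by (simp add: y_def matrix_vector_mult_diff_distrib matrix_vector_mult_basis)
    moreover have "\<forall>k. k \<notin> I \<longrightarrow> y $ k = 0" using ij by (auto simp: y_def axis_def)
    ultimately have "y = 0" using h by (auto simp: independent_columns_def)
    moreover have "y $ i = 1" using ij by (simp add: y_def axis_def)
    ultimately show False by simp
  qed
  show "independent ((\<lambda>j. column j A) ` I)"
    unfolding independent_explicit
  proof (intro conjI allI impI ballI)
    fix u v assume z: "(\<Sum>v\<in>(\<lambda>j. column j A) ` I. u v *\<^sub>R v) = 0"
      and v: "v \<in> (\<lambda>j. column j A) ` I"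
    define y :: "real^'d" where "y = (\<chi> j. if j \<in> I then u (column j A) else 0)"
    have "A *v y = (\<Sum>j\<in>I. y $ j *\<^sub>R column j A)"
      by (rule matrix_vector_mult_supported) (simp add: y_def)
    also have "\<dots> = (\<Sum>j\<in>I. u (column j A) *\<^sub>R column j A)"
      by (rule sum.cong) (auto simp: y_def)
    also have "\<dots> = (\<Sum>v\<in>(\<lambda>j. column j A) ` I. u v *\<^sub>R v)"
      by (rule sum.reindex[OF inj, unfolded comp_def, symmetric])
    finally have "y = 0" using h z by (auto simp: independent_columns_def y_def)
    moreover obtain j where j: "j \<in> I" "v = column j A" using v by blast
    ultimately have "y $ j = 0" by simp
    then show "u v = 0" using j by (simp add: y_def)
  qed simp
qed

lemma independent_columnsI:
  fixes A :: "real^'d^'m"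
  assumes inj: "inj_on (\<lambda>j. column j A) I" and ind: "independent ((\<lambda>j. column j A) ` I)"
  shows "independent_columns A I"
  unfolding independent_columns_def
proof (intro allI impI)
  fix y :: "real^'d" assume y: "(\<forall>j. j \<notin> I \<longrightarrow> y $ j = 0) \<and> A *v y = 0"
  define u where "u v = y $ (inv_into I (\<lambda>j. column j A) v)" for v
  have "(\<Sum>v\<in>(\<lambda>j. column j A) ` I. u v *\<^sub>R v) = (\<Sum>j\<in>I. u (column j A) *\<^sub>R column j A)"
    by (rule sum.reindex[OF inj, unfolded comp_def])
  also have "\<dots> = (\<Sum>j\<in>I. y $ j *\<^sub>R column j A)"
    by (rule sum.cong) (auto simp: u_def inv_into_f_f[OF inj])
  also have "\<dots> = A *v y" using y by (intro matrix_vector_mult_supported[symmetric]) auto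
  finally have z: "(\<Sum>v\<in>(\<lambda>j. column j A) ` I. u v *\<^sub>R v) = 0" using y by simp
  show "y = 0"
  proof (subst vec_eq_iff, rule allI)
    fix j show "y $ j = 0 $ j"
    proof (cases "j \<in> I")
      case True
      then have "u (column j A) = 0" using ind z unfolding independent_explicit by auto
      then show ?thesis using True by (simp add: u_def inv_into_f_f[OF inj])
    qed (use y in auto)
  qed
qed

lemma is_basis_iff_independent_columns:
  fixes A :: "real^'d^'m"
  shows "is_basis A I \<longleftrightarrow> card I = CARD('m) \<and> independent_columns A I"
  unfolding is_basis_def using independent_columnsD independent_columnsI by blast

lemma independent_columns_card_le:
  fixes A :: "real^'d^'m"
  assumes "independent_columns A I"
  shows "card I \<le> CARD('m)"
proof -
  have "card I = card ((\<lambda>j. column j A) ` I)"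
    using independent_columnsD(1)[OF assms] by (simp add: card_image)
  also have "\<dots> \<le> DIM(real^'m)"
    using independent_bound[OF independent_columnsD(2)[OF assms]] by simp
  finally show ?thesis by simp
qed

lemma span_basis_columns:
  fixes A :: "real^'d^'m"
  assumes "is_basis A J"
  shows "span ((\<lambda>j. column j A) ` J) = UNIV"
proof -
  have "dim ((\<lambda>j. column j A) ` J) = card ((\<lambda>j. column j A) ` J)"
    using assms dim_eq_card_independent by (auto simp: is_basis_def)
  also have "\<dots> = DIM(real^'m)" using assms by (simp add: is_basis_def card_image)
  finally show ?thesis using dim_eq_full by blast
qed

lemma basic_primal_unique:
  fixes A :: "real^'d^'m"
  assumes "is_basis A J" "\<forall>j. j \<notin> J \<longrightarrow> x $ j = 0" "A *v x = \<beta>"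
  shows "basic_primal A J \<beta> = x"
  unfolding basic_primal_def
proof (rule the_equality)
  fix y assume y: "(\<forall>j. j \<notin> J \<longrightarrow> y $ j = 0) \<and> A *v y = \<beta>"
  have "A *v (y - x) = 0" and "\<forall>j. j \<notin> J \<longrightarrow> (y - x) $ j = 0"
    using y assms by (simp_all add: matrix_vector_mult_diff_distrib)
  moreover have "independent_columns A J"
    using assms(1) by (simp add: is_basis_iff_independent_columns)
  ultimately have "y - x = 0" unfolding independent_columns_def by blast
  then show "y = x" by simp
qed (use assms in simp)

lemma basic_primal_solution:
  fixes A :: "real^'d^'m"
  assumes "is_basis A J"
  shows "\<forall>j. j \<notin> J \<longrightarrow> basic_primal A J \<beta> $ j = 0" "A *v basic_primal A J \<beta> = \<beta>"
proof -
  have "\<beta> \<in> span ((\<lambda>j. column j A) ` J)" using span_basis_columns[OF assms] by simp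
  then obtain u where u: "\<beta> = (\<Sum>v\<in>(\<lambda>j. column j A) ` J. u v *\<^sub>R v)"
    using span_finite[of "(\<lambda>j. column j A) ` J"] by (auto simp: scalar_mult_eq_scaleR)
  define x :: "real^'d" where "x = (\<chi> j. if j \<in> J then u (column j A) else 0)"
  have inj: "inj_on (\<lambda>j. column j A) J" using assms by (simp add: is_basis_def)
  have "A *v x = (\<Sum>j\<in>J. x $ j *\<^sub>R column j A)"
    by (rule matrix_vector_mult_supported) (simp add: x_def)
  also have "\<dots> = (\<Sum>j\<in>J. u (column j A) *\<^sub>R column j A)"
    by (rule sum.cong) (auto simp: x_def)
  also have "\<dots> = \<beta>"
    unfolding u by (rule sum.reindex[OF inj, unfolded comp_def, symmetric])
  finally have Ax: "A *v x = \<beta>" .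
  then have "basic_primal A J \<beta> = x"
    using assms by (intro basic_primal_unique) (auto simp: x_def)
  then show "\<forall>j. j \<notin> J \<longrightarrow> basic_primal A J \<beta> $ j = 0" "A *v basic_primal A J \<beta> = \<beta>"
    using Ax by (auto simp: x_def)
qed

lemma linear_basic_primal:
  fixes A :: "real^'d^'m"
  assumes "is_basis A J"
  shows "linear (basic_primal A J)"
proof (rule linearI)
  fix x y :: "real^'m" and r :: real
  show "basic_primal A J (x + y) = basic_primal A J x + basic_primal A J y"
    using basic_primal_solution[OF assms, of x] basic_primal_solution[OF assms, of y]
    by (intro basic_primal_unique[OF assms]) (auto simp: matrix_vector_right_distrib)
  show "basic_primal A J (r *\<^sub>R x) = r *\<^sub>R basic_primal A J x"
    using basic_primal_solution[OF assms, of x]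
    by (intro basic_primal_unique[OF assms]) (auto simp: matrix_vector_mult_scaleR)
qed

lemma linear_functional_eq_inner:
  fixes g :: "real^'m \<Rightarrow> real"
  assumes "linear g"
  shows "g x = (\<chi> i. g (axis i 1)) \<bullet> x"
proof -
  have "g x = g (\<Sum>i\<in>UNIV. x$i *\<^sub>R axis i 1)"
    using basis_expansion[of x] by (simp add: scalar_mult_eq_scaleR)
  also have "\<dots> = (\<Sum>i\<in>UNIV. x$i * g (axis i 1))"
    by (simp add: linear_sum[OF assms] linear_scale[OF assms])
  also have "\<dots> = (\<chi> i. g (axis i 1)) \<bullet> x" by (simp add: inner_vec_def mult.commute)
  finally show ?thesis .
qed

lemma basic_dual_unique:
  fixes A :: "real^'d^'m"
  assumes "is_basis A J" "\<forall>j\<in>J. column j A \<bullet> l = c $ j"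
  shows "basic_dual A c J = l"
  unfolding basic_dual_def transpose_mult_vec_nth
proof (rule the_equality)
  fix l' assume l': "\<forall>j\<in>J. column j A \<bullet> l' = c $ j"
  have orth: "orthogonal (l' - l) v" if v: "v \<in> (\<lambda>j. column j A) ` J" for v
  proof -
    obtain j where j: "j \<in> J" "v = column j A" using v by blast
    then have "column j A \<bullet> l' = column j A \<bullet> l" using l' assms(2) by simp
    then show ?thesis using j by (simp add: orthogonal_def inner_diff_right inner_commute)
  qed
  have "orthogonal (l' - l) (l' - l)"
    by (rule orthogonal_to_span[of _ "(\<lambda>j. column j A) ` J"])
      (auto simp: span_basis_columns[OF assms(1)] intro: orth)
  then show "l' = l" by (simp add: orthogonal_def)
qed (use assms in simp)

lemma basic_dual_solution:
  fixes A :: "real^'d^'m"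
  assumes "is_basis A J"
  shows "\<forall>j\<in>J. column j A \<bullet> basic_dual A c J = c $ j"
proof -
  have inj: "inj_on (\<lambda>j. column j A) J" and ind: "independent ((\<lambda>j. column j A) ` J)"
    using assms by (auto simp: is_basis_def)
  from linear_independent_extend[OF ind, of "\<lambda>v. c $ (inv_into J (\<lambda>j. column j A) v)"]
  obtain g :: "real^'m \<Rightarrow> real" where g: "linear g"
    "\<forall>v\<in>(\<lambda>j. column j A) ` J. g v = c $ (inv_into J (\<lambda>j. column j A) v)"
    by (elim exE conjE) (rule that)
  define l where "l = (\<chi> i. g (axis i 1))"
  have l: "column j A \<bullet> l = c $ j" if "j \<in> J" for j
  proof -
    have "g (column j A) = c $ j" using g(2) that inv_into_f_f[OF inj that] by auto
    then show ?thesis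
      using linear_functional_eq_inner[OF g(1), of "column j A"] by (simp add: l_def inner_commute)
  qed
  then have "basic_dual A c J = l" by (intro basic_dual_unique[OF assms]) auto
  then show ?thesis using l by simp
qed

lemma weak_duality:
  fixes A :: "real^'d^'m"
  assumes "primal_feasible A \<beta> x" "dual_feasible A c l"
  shows "\<beta> \<bullet> l \<le> c \<bullet> x"
proof -
  have "\<beta> \<bullet> l = (\<Sum>j\<in>UNIV. x $ j * (column j A \<bullet> l))"
    using assms(1) by (simp add: primal_feasible_def inner_matrix_vector_mult[symmetric])
  also have "\<dots> \<le> (\<Sum>j\<in>UNIV. x $ j * c $ j)"
    using assms
    by (intro sum_mono mult_left_mono) (auto simp: primal_feasible_def dual_feasible_iff_columns)
  also have "\<dots> = c \<bullet> x" by (simp add: inner_vec_def mult.commute)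
  finally show ?thesis .
qed

lemma opt_value_eq_primal_optimal:
  fixes A :: "real^'d^'m"
  assumes "primal_optimal A c \<beta> x"
  shows "opt_value A c \<beta> = c \<bullet> x"
  unfolding opt_value_def
  by (rule cInf_eq_minimum) (use assms in \<open>auto simp: primal_optimal_def\<close>)

lemma basic_primal_dual_same_value:
  fixes A :: "real^'d^'m"
  assumes "is_basis A I"
  shows "c \<bullet> basic_primal A I \<beta> = \<beta> \<bullet> basic_dual A c I"
proof -
  let ?x = "basic_primal A I \<beta>" and ?l = "basic_dual A c I"
  have "c \<bullet> ?x = (\<Sum>j\<in>UNIV. ?x $ j * c $ j)" by (simp add: inner_vec_def mult.commute)
  also have "\<dots> = (\<Sum>j\<in>UNIV. ?x $ j * (column j A \<bullet> ?l))"
  proof (rule sum.cong[OF refl])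
    fix j show "?x $ j * c $ j = ?x $ j * (column j A \<bullet> ?l)"
      using basic_primal_solution(1)[OF assms] basic_dual_solution[OF assms] by (cases "j \<in> I") auto
  qed
  also have "\<dots> = \<beta> \<bullet> ?l" by (simp add: inner_matrix_vector_mult[symmetric] basic_primal_solution[OF assms])
  finally show ?thesis .
qed

section \<open>Duality\<close>

definition nonneg_orthant :: "(real^'d) set" where
  "nonneg_orthant = {x. \<forall>j. 0 \<le> x $ j}"

lemma convex_cone_nonneg_orthant: "convex_cone nonneg_orthant"
  by (auto simp: convex_cone_iff nonneg_orthant_def)

lemma sum_in_convex_cone_hull:
  assumes "finite F" "\<forall>i\<in>F. 0 \<le> a i \<and> v i \<in> convex_cone hull S"
  shows "(\<Sum>i\<in>F. a i *\<^sub>R v i) \<in> convex_cone hull S"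
  using assms
proof (induction F rule: finite_induct)
  case empty then show ?case by (simp add: convex_cone_hull_contains_0)
next
  case (insert x F) then show ?case
    by (simp add: convex_cone_hull_add convex_cone_hull_mul)
qed

lemma linear_image_nonneg_orthant:
  fixes L :: "real^'d \<Rightarrow> 'b::euclidean_space"
  assumes "linear L"
  shows "L ` nonneg_orthant = convex_cone hull (range (\<lambda>j. L (axis j 1)))"
proof
  show "L ` nonneg_orthant \<subseteq> convex_cone hull (range (\<lambda>j. L (axis j 1)))"
  proof
    fix y assume "y \<in> L ` nonneg_orthant"
    then obtain x where x: "x \<in> nonneg_orthant" "y = L x" by blast
    have "L x = L (\<Sum>j\<in>UNIV. x $ j *\<^sub>R axis j 1)"
      using basis_expansion[of x] by (simp add: scalar_mult_eq_scaleR)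
    also have "\<dots> = (\<Sum>j\<in>UNIV. x $ j *\<^sub>R L (axis j 1))"
      by (simp add: linear_sum[OF assms] linear_scale[OF assms])
    also have "\<dots> \<in> convex_cone hull (range (\<lambda>j. L (axis j 1)))"
      using x(1) by (intro sum_in_convex_cone_hull) (auto simp: nonneg_orthant_def intro: hull_inc)
    finally show "y \<in> convex_cone hull (range (\<lambda>j. L (axis j 1)))" using x by simp
  qed
  show "convex_cone hull (range (\<lambda>j. L (axis j 1))) \<subseteq> L ` nonneg_orthant"
    using assms convex_cone_nonneg_orthant
    by (intro hull_minimal convex_cone_linear_image) (auto simp: nonneg_orthant_def axis_def)
qed

lemma closed_linear_image_nonneg_orthant:
  fixes L :: "real^'d \<Rightarrow> 'b::euclidean_space"
  assumes "linear L"
  shows "closed (L ` nonneg_orthant)"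
  unfolding linear_image_nonneg_orthant[OF assms] by (rule closed_convex_cone_hull) simp

lemma separating_hyperplane_convex_cone:
  fixes K :: "'a::euclidean_space set"
  assumes "convex_cone K" "closed K" "p \<notin> K"
  obtains a where "a \<bullet> p < 0" "\<And>k. k \<in> K \<Longrightarrow> 0 \<le> a \<bullet> k"
proof -
  obtain a b where ab: "a \<bullet> p < b" "\<forall>k\<in>K. b < a \<bullet> k"
    using separating_hyperplane_closed_point assms convex_cone_def by metis
  have b: "b < 0" using ab(2) convex_cone_contains_0[OF assms(1)] by fastforce
  have "0 \<le> a \<bullet> k" if k: "k \<in> K" for k
  proof (rule ccontr)
    assume neg: "\<not> 0 \<le> a \<bullet> k"
    have "(b / (a \<bullet> k)) *\<^sub>R k \<in> K"
      using assms(1) k neg b by (simp add: convex_cone_iff divide_nonpos_neg)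
    then have "b < (b / (a \<bullet> k)) * (a \<bullet> k)" using ab(2) by fastforce
    then show False using neg by simp
  qed
  then show thesis using ab(1) b by (intro that) auto
qed

lemma linear_constraint_value_pair: "linear (\<lambda>x::real^'d. (A *v x, c \<bullet> x))"
  for A :: "real^'d^'m"
  by (rule linearI) (simp_all add: algebra_simps inner_add_right matrix_vector_right_distrib)

lemma farkas_constraint_value:
  fixes A :: "real^'d^'m"
  assumes "(\<beta>, t) \<notin> (\<lambda>x. (A *v x, c \<bullet> x)) ` nonneg_orthant"
  obtains w \<tau> where "w \<bullet> \<beta> + \<tau> * t < 0"
    "\<And>x. x \<in> nonneg_orthant \<Longrightarrow> 0 \<le> w \<bullet> (A *v x) + \<tau> * (c \<bullet> x)"
proof -
  let ?L = "\<lambda>x::real^'d. (A *v x, c \<bullet> x)"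
  have lin: "linear ?L" by (rule linear_constraint_value_pair)
  have "convex_cone (?L ` nonneg_orthant)"
    by (intro convex_cone_linear_image conjI convex_cone_nonneg_orthant lin)
  then obtain a where a: "a \<bullet> (\<beta>, t) < 0" "\<And>k. k \<in> ?L ` nonneg_orthant \<Longrightarrow> 0 \<le> a \<bullet> k"
    by (rule separating_hyperplane_convex_cone[OF _ closed_linear_image_nonneg_orthant[OF lin] assms]) blast
  obtain w \<tau> where "a = (w, \<tau>)" by (cases a)
  then show thesis using a by (intro that[of w \<tau>]) auto
qed

lemma exists_dual_feasible_above:
  fixes A :: "real^'d^'m"
  assumes opt: "primal_optimal A c \<beta> xs" and t0: "t0 < c \<bullet> xs"
  obtains l where "dual_feasible A c l" "t0 < \<beta> \<bullet> l"
proof -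
  have "(\<beta>, t0) \<notin> (\<lambda>x. (A *v x, c \<bullet> x)) ` nonneg_orthant"
  proof
    assume "(\<beta>, t0) \<in> (\<lambda>x. (A *v x, c \<bullet> x)) ` nonneg_orthant"
    then obtain x where "primal_feasible A \<beta> x" "c \<bullet> x = t0"
      by (auto simp: primal_feasible_def nonneg_orthant_def)
    then show False using opt t0 by (fastforce simp: primal_optimal_def)
  qed
  then obtain w \<tau> where neg: "w \<bullet> \<beta> + \<tau> * t0 < 0"
    and nn: "\<And>x. x \<in> nonneg_orthant \<Longrightarrow> 0 \<le> w \<bullet> (A *v x) + \<tau> * (c \<bullet> x)"
    by (rule farkas_constraint_value) blast
  have col: "0 \<le> w \<bullet> column j A + \<tau> * c $ j" for j
  proof -
    have "axis j 1 \<in> nonneg_orthant" by (simp add: nonneg_orthant_def axis_def)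
    from nn[OF this] show ?thesis by (simp add: matrix_vector_mult_basis inner_axis inner_commute)
  qed
  have "0 \<le> w \<bullet> \<beta> + \<tau> * (c \<bullet> xs)"
    using nn[of xs] opt by (auto simp: primal_optimal_def primal_feasible_def nonneg_orthant_def)
  with neg have "0 < \<tau> * (c \<bullet> xs - t0)" by (simp add: algebra_simps)
  then have \<tau>: "0 < \<tau>" using t0 by (simp add: zero_less_mult_iff)
  define l where "l = (- 1 / \<tau>) *\<^sub>R w"
  show thesis
  proof
    show "dual_feasible A c l"
      unfolding dual_feasible_iff_columns
    proof
      fix j show "column j A \<bullet> l \<le> c $ j"
        using col[of j] \<tau> by (simp add: l_def inner_commute field_simps)
    qed
    show "t0 < \<beta> \<bullet> l"
      using neg \<tau> by (simp add: l_def inner_commute field_simps)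
  qed
qed

lemma exists_dual_feasible:
  fixes A :: "real^'d^'m"
  assumes "primal_optimal A c \<beta> xs"
  obtains l where "dual_feasible A c l"
  using exists_dual_feasible_above[OF assms, of "c \<bullet> xs - 1"] by auto

lemma has_optimal_if_feasible:
  fixes A :: "real^'d^'m"
  assumes feas: "primal_feasible A \<beta> x0" and df: "dual_feasible A c l0"
  shows "has_optimal A c \<beta>"
proof -
  define V where "V = {c \<bullet> x | x. primal_feasible A \<beta> x}"
  have ne: "V \<noteq> {}" using feas by (auto simp: V_def)
  have bdd: "bdd_below V" using weak_duality[OF _ df] by (auto simp: V_def bdd_below_def)
  define L where "L = (\<lambda>x::real^'d. (A *v x, c \<bullet> x))"
  have lin: "linear L" unfolding L_def by (rule linear_constraint_value_pair)
  have "(\<beta>, Inf V) \<in> closure (L ` nonneg_orthant)"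
    unfolding closure_approachable
  proof (intro allI impI)
    fix e :: real assume "e > 0"
    then have "Inf V < Inf V + e" by simp
    then obtain y where y: "y \<in> V" "y < Inf V + e" using cInf_less_iff[OF ne bdd] by blast
    then obtain x where x: "primal_feasible A \<beta> x" "y = c \<bullet> x" by (auto simp: V_def)
    have "Inf V \<le> y" using y(1) bdd by (simp add: cInf_lower)
    then have "dist (L x) (\<beta>, Inf V) < e"
      using x y by (simp add: L_def dist_Pair_Pair primal_feasible_def dist_real_def)
    moreover have "L x \<in> L ` nonneg_orthant"
      using x(1) by (auto simp: primal_feasible_def nonneg_orthant_def)
    ultimately show "\<exists>y\<in>L ` nonneg_orthant. dist y (\<beta>, Inf V) < e" by blast
  qed
  then have "(\<beta>, Inf V) \<in> L ` nonneg_orthant"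
    using closed_linear_image_nonneg_orthant[OF lin] by simp
  then obtain x where x: "primal_feasible A \<beta> x" "c \<bullet> x = Inf V"
    by (auto simp: L_def primal_feasible_def nonneg_orthant_def)
  then have "primal_optimal A c \<beta> x"
    using bdd by (auto simp: primal_optimal_def V_def intro: cInf_lower)
  then show ?thesis by (auto simp: has_optimal_def)
qed

lemma exists_min_ratio:
  fixes a s :: "'d \<Rightarrow> real"
  assumes "finite P" "P \<noteq> {}" "\<forall>j\<in>P. 0 < a j" "\<forall>j\<in>P. 0 \<le> s j"
  obtains k where "k \<in> P" "0 \<le> s k / a k" "\<forall>j\<in>P. s k / a k * a j \<le> s j"
proof -
  have "Min ((\<lambda>j. s j / a j) ` P) \<in> (\<lambda>j. s j / a j) ` P" using assms by simp
  then obtain k where k: "k \<in> P" "Min ((\<lambda>j. s j / a j) ` P) = s k / a k" by auto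
  show thesis
  proof (rule that[OF k(1)])
    have "0 < a k" "0 \<le> s k" using assms(3,4) k(1) by auto
    then show "0 \<le> s k / a k" by simp
    show "\<forall>j\<in>P. s k / a k * a j \<le> s j"
    proof
      fix j assume j: "j \<in> P"
      have aj: "0 < a j" using assms(3) j by blast
      have "Min ((\<lambda>j. s j / a j) ` P) \<le> s j / a j" using assms(1) j by simp
      then have "s k / a k \<le> s j / a j" using k(2) by simp
      then show "s k / a k * a j \<le> s j" by (subst (asm) pos_le_divide_eq[OF aj])
    qed
  qed
qed

lemma support_reduction_step:
  fixes A :: "real^'d^'m"
  assumes x: "\<forall>j. 0 \<le> x $ j"
    and z: "A *v z = 0" "\<forall>j. x $ j = 0 \<longrightarrow> z $ j = 0" "\<exists>j. 0 < z $ j"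
  obtains x' where "\<forall>j. 0 \<le> x' $ j" "A *v x' = A *v x" "{j. x' $ j \<noteq> 0} \<subset> {j. x $ j \<noteq> 0}"
proof -
  define Q where "Q = {j. 0 < z $ j}"
  have "finite Q" "Q \<noteq> {}" "\<forall>j\<in>Q. 0 < z $ j" "\<forall>j\<in>Q. 0 \<le> x $ j"
    using z(3) x by (auto simp: Q_def)
  then obtain k where k: "k \<in> Q" "0 \<le> x $ k / z $ k" "\<forall>j\<in>Q. x $ k / z $ k * z $ j \<le> x $ j"
    by (rule exists_min_ratio)
  define x' where "x' = x - (x $ k / z $ k) *\<^sub>R z"
  have "\<forall>j. 0 \<le> x' $ j"
  proof
    fix j show "0 \<le> x' $ j"
    proof (cases "j \<in> Q")
      case False
      then have "z $ j \<le> 0" by (simp add: Q_def)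
      then have "x $ k / z $ k * z $ j \<le> 0" by (rule mult_nonneg_nonpos[OF k(2)])
      moreover have "0 \<le> x $ j" using x by simp
      ultimately show ?thesis by (simp add: x'_def)
    qed (use k in \<open>simp add: x'_def\<close>)
  qed
  moreover have "A *v x' = A *v x"
    using z(1) by (simp add: x'_def matrix_vector_mult_diff_distrib matrix_vector_mult_scaleR)
  moreover have "{j. x' $ j \<noteq> 0} \<subset> {j. x $ j \<noteq> 0}"
  proof -
    have "0 < z $ k" using k(1) by (simp add: Q_def)
    then have "x' $ k = 0" "x $ k \<noteq> 0" using z(2) by (auto simp: x'_def)
    moreover have "{j. x' $ j \<noteq> 0} \<subseteq> {j. x $ j \<noteq> 0}" using z(2) by (auto simp: x'_def)
    ultimately show ?thesis by blast
  qed
  ultimately show thesis by (rule that)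
qed

lemma nonneg_solution_with_independent_support:
  fixes A :: "real^'d^'m"
  assumes "\<forall>j. 0 \<le> x $ j" "A *v x = \<beta>" "\<forall>j. j \<notin> T \<longrightarrow> x $ j = 0"
  obtains x' where "\<forall>j. 0 \<le> x' $ j" "A *v x' = \<beta>" "\<forall>j. j \<notin> T \<longrightarrow> x' $ j = 0"
    "independent_columns A {j. x' $ j \<noteq> 0}"
proof -
  define P where "P x \<longleftrightarrow> (\<forall>j. 0 \<le> x $ j) \<and> A *v x = \<beta> \<and> (\<forall>j. j \<notin> T \<longrightarrow> x $ j = 0)" for x
  obtain x0 where x0: "P x0" and min: "\<forall>y. P y \<longrightarrow> card {j. x0 $ j \<noteq> 0} \<le> card {j. y $ j \<noteq> 0}"
    using ex_has_least_nat[of P x "\<lambda>y. card {j. y $ j \<noteq> 0}"] assms by (auto simp: P_def)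
  have "independent_columns A {j. x0 $ j \<noteq> 0}"
  proof (rule ccontr)
    assume "\<not> ?thesis"
    then obtain y where y: "\<forall>j. x0 $ j = 0 \<longrightarrow> y $ j = 0" "A *v y = 0" "y \<noteq> 0"
      by (auto simp: independent_columns_def)
    obtain i where i: "y $ i \<noteq> 0" using y(3) by (auto simp: vec_eq_iff)
    define z where "z = (if 0 < y $ i then y else - y)"
    have z: "\<forall>j. x0 $ j = 0 \<longrightarrow> z $ j = 0" "A *v z = 0" "\<exists>j. 0 < z $ j"
      using y i linear_neg[OF matrix_vector_mul_linear[of A], of y]
      by (auto simp: z_def intro!: exI[of _ i])
    obtain x1 where x1: "\<forall>j. 0 \<le> x1 $ j" "A *v x1 = A *v x0" "{j. x1 $ j \<noteq> 0} \<subset> {j. x0 $ j \<noteq> 0}"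
      using x0 by (auto simp: P_def elim!: support_reduction_step[OF _ z(2,1,3)])
    then have "P x1" using x0 by (auto simp: P_def)
    moreover have "card {j. x1 $ j \<noteq> 0} < card {j. x0 $ j \<noteq> 0}" using x1(3) by (simp add: psubset_card_mono)
    ultimately show False using min by fastforce
  qed
  then show thesis using x0 by (intro that[of x0]) (auto simp: P_def)
qed

lemma independent_columns_insert:
  fixes A :: "real^'d^'m"
  assumes J: "independent_columns A J" and t: "column t A \<notin> span ((\<lambda>j. column j A) ` J)"
  shows "independent_columns A (insert t J)"
  unfolding independent_columns_def
proof (intro allI impI)
  fix y :: "real^'d" assume y: "(\<forall>j. j \<notin> insert t J \<longrightarrow> y $ j = 0) \<and> A *v y = 0"
  have tJ: "t \<notin> J" using t by (auto intro: span_base)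
  have "A *v y = y $ t *\<^sub>R column t A + (\<Sum>j\<in>J. y $ j *\<^sub>R column j A)"
    using y tJ by (subst matrix_vector_mult_supported[of "insert t J"]) auto
  then have eq: "y $ t *\<^sub>R column t A = - (\<Sum>j\<in>J. y $ j *\<^sub>R column j A)"
    using y by (simp add: eq_neg_iff_add_eq_0)
  have "y $ t = 0"
  proof (rule ccontr)
    assume nz: "y $ t \<noteq> 0"
    have "- (\<Sum>j\<in>J. y $ j *\<^sub>R column j A) \<in> span ((\<lambda>j. column j A) ` J)"
      by (intro span_neg span_sum span_scale) (auto intro: span_base)
    then have "inverse (y $ t) *\<^sub>R (y $ t *\<^sub>R column t A) \<in> span ((\<lambda>j. column j A) ` J)"
      unfolding eq by (rule span_scale)
    then show False using t nz by simp
  qed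
  then show "y = 0" using J y by (auto simp: independent_columns_def)
qed

lemma extend_to_basis:
  fixes A :: "real^'d^'m"
  assumes "independent_columns A S" "S \<subseteq> T" "dim ((\<lambda>j. column j A) ` T) = CARD('m)"
  obtains J where "is_basis A J" "S \<subseteq> J" "J \<subseteq> T"
proof -
  define Q where "Q J \<longleftrightarrow> independent_columns A J \<and> S \<subseteq> J \<and> J \<subseteq> T" for J
  obtain J where J: "Q J" and max: "\<forall>K. Q K \<longrightarrow> card K \<le> card J"
    using ex_has_greatest_nat[of Q S card "CARD('d) + 1"] assms
    by (auto simp: Q_def le_imp_less_Suc card_mono)
  have "card J = CARD('m)"
  proof (rule ccontr)
    assume "card J \<noteq> CARD('m)"
    then have lt: "card J < CARD('m)" using independent_columns_card_le J by (force simp: Q_def)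
    obtain t where t: "t \<in> T" "column t A \<notin> span ((\<lambda>j. column j A) ` J)"
    proof (rule ccontr)
      assume "\<not> thesis"
      then have "(\<lambda>j. column j A) ` T \<subseteq> span ((\<lambda>j. column j A) ` J)" using that by blast
      then have "dim ((\<lambda>j. column j A) ` T) \<le> card ((\<lambda>j. column j A) ` J)" by (intro dim_le_card) auto
      also have "\<dots> \<le> card J" by (rule card_image_le) simp
      finally show False using lt assms(3) by simp
    qed
    then have "Q (insert t J)" using J independent_columns_insert by (auto simp: Q_def)
    then have "card (insert t J) \<le> card J" using max by blast
    moreover have "t \<notin> J" using t(2) by (auto intro: span_base)
    ultimately show False by simp
  qed
  then show thesis using J by (intro that[of J]) (auto simp: Q_def is_basis_iff_independent_columns)
qed

lemma inner_le_0_if_primal_feasible: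
  fixes A :: "real^'d^'m"
  assumes "primal_feasible A \<beta> x" "\<forall>j. column j A \<bullet> u \<le> 0"
  shows "\<beta> \<bullet> u \<le> 0"
proof -
  have "\<beta> \<bullet> u = (\<Sum>j\<in>UNIV. x $ j * (column j A \<bullet> u))"
    using assms(1) by (simp add: primal_feasible_def inner_matrix_vector_mult[symmetric])
  also have "\<dots> \<le> 0"
    using assms by (intro sum_nonpos mult_nonneg_nonpos) (auto simp: primal_feasible_def)
  finally show ?thesis .
qed

lemma full_rank_column_inner_nonzero:
  fixes A :: "real^'d^'m"
  assumes "rank A = CARD('m)" "u \<noteq> 0"
  obtains j where "column j A \<bullet> u \<noteq> 0"
proof -
  have "inj ((*v) (transpose A))" using assms(1) rank_transpose[of A] full_rank_injective by metis
  then have "transpose A *v u \<noteq> 0" using assms(2) by (metis injD matrix_vector_mult_0_right)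
  then obtain j where "(transpose A *v u) $ j \<noteq> 0" by (metis vec_eq_iff zero_index)
  then show thesis using that transpose_mult_vec_nth by metis
qed

lemma dual_ascent_direction:
  fixes A :: "real^'d^'m"
  assumes full: "rank A = CARD('m)" and pf: "primal_feasible A \<beta> x"
    and dim: "dim ((\<lambda>j. column j A) ` T) < CARD('m)"
  obtains s where "\<forall>j\<in>T. column j A \<bullet> s = 0" "0 \<le> \<beta> \<bullet> s" "\<exists>j. 0 < column j A \<bullet> s"
proof -
  have "dim ((\<lambda>j. column j A) ` T) < DIM(real^'m)" using dim by simp
  then obtain u :: "real^'m"
    where u: "u \<noteq> 0" "\<And>y. y \<in> span ((\<lambda>j. column j A) ` T) \<Longrightarrow> orthogonal u y"
    using orthogonal_to_subspace_exists by blast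
  have ut: "column j A \<bullet> u = 0" if "j \<in> T" for j
    using u(2)[of "column j A"] that by (auto simp: orthogonal_def inner_commute intro: span_base)
  obtain jn where jn: "column jn A \<bullet> u \<noteq> 0" using full_rank_column_inner_nonzero[OF full u(1)] .
  define \<sigma> where "\<sigma> = (if 0 \<le> \<beta> \<bullet> u then u else - u)"
  have \<sigma>: "0 \<le> \<beta> \<bullet> \<sigma>" "\<forall>j\<in>T. column j A \<bullet> \<sigma> = 0" "column jn A \<bullet> \<sigma> \<noteq> 0"
    using ut jn by (auto simp: \<sigma>_def)
  show thesis
  proof (cases "\<beta> \<bullet> \<sigma> = 0")
    case True
    define s where "s = (if 0 < column jn A \<bullet> \<sigma> then \<sigma> else - \<sigma>)"
    have "0 < column jn A \<bullet> s" using \<sigma>(3) by (auto simp: s_def)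
    moreover have "\<forall>j\<in>T. column j A \<bullet> s = 0" "\<beta> \<bullet> s = 0" using \<sigma>(2) True by (auto simp: s_def)
    ultimately show thesis using that[of s] by auto
  next
    case False
    then have "\<exists>j. 0 < column j A \<bullet> \<sigma>"
      using inner_le_0_if_primal_feasible[OF pf, of \<sigma>] \<sigma>(1) by (meson linorder_not_le order_antisym)
    then show thesis using that \<sigma>(1,2) by blast
  qed
qed

lemma dual_ratio_step:
  fixes A :: "real^'d^'m"
  assumes l: "dual_feasible A c l" and s: "0 \<le> \<beta> \<bullet> s" "\<exists>j. 0 < column j A \<bullet> s"
  obtains l' k where "dual_feasible A c l'" "\<beta> \<bullet> l \<le> \<beta> \<bullet> l'" "0 < column k A \<bullet> s"
    "column k A \<bullet> l' = c $ k" "\<forall>j. column j A \<bullet> s = 0 \<longrightarrow> column j A \<bullet> l' = column j A \<bullet> l"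
proof -
  define P where "P = {j. 0 < column j A \<bullet> s}"
  have "finite P" "P \<noteq> {}" "\<forall>j\<in>P. 0 < column j A \<bullet> s" "\<forall>j\<in>P. 0 \<le> c $ j - column j A \<bullet> l"
    using s l by (auto simp: P_def dual_feasible_iff_columns)
  then obtain k where k: "k \<in> P" "0 \<le> (c $ k - column k A \<bullet> l) / (column k A \<bullet> s)"
    "\<forall>j\<in>P. (c $ k - column k A \<bullet> l) / (column k A \<bullet> s) * (column j A \<bullet> s) \<le> c $ j - column j A \<bullet> l"
    by (rule exists_min_ratio)
  define t where "t = (c $ k - column k A \<bullet> l) / (column k A \<bullet> s)"
  have t: "0 \<le> t" unfolding t_def by (rule k(2))
  define l' where "l' = l + t *\<^sub>R s"
  have col: "column j A \<bullet> l' = column j A \<bullet> l + t * (column j A \<bullet> s)" for j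
    by (simp add: l'_def inner_add_right)
  have "dual_feasible A c l'"
    unfolding dual_feasible_iff_columns
  proof
    fix j show "column j A \<bullet> l' \<le> c $ j"
    proof (cases "j \<in> P")
      case True
      then have "t * (column j A \<bullet> s) \<le> c $ j - column j A \<bullet> l" using k(3) unfolding t_def by blast
      then show ?thesis by (simp add: col)
    next
      case False
      then have "t * (column j A \<bullet> s) \<le> 0" using t by (simp add: P_def mult_nonneg_nonpos)
      moreover have "column j A \<bullet> l \<le> c $ j" using l by (simp add: dual_feasible_iff_columns)
      ultimately show ?thesis by (simp add: col)
    qed
  qed
  moreover have "\<beta> \<bullet> l \<le> \<beta> \<bullet> l'" using t s(1) by (simp add: l'_def inner_add_right)
  moreover have sk: "0 < column k A \<bullet> s" using k(1) by (simp add: P_def)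
  moreover have "column k A \<bullet> l' = c $ k" using sk by (simp add: col t_def)
  ultimately show thesis using that[of l' k] by (simp add: col)
qed

text \<open>Take a dual solution above \<open>l\<close> with the most tight constraints; if the tight columns did not
  span, an ascent direction orthogonal to them would make one more constraint tight.\<close>

lemma dual_vertex_above:
  fixes A :: "real^'d^'m"
  assumes full: "rank A = CARD('m)" and pf: "primal_feasible A \<beta> x" and l: "dual_feasible A c l"
  obtains l' where "dual_feasible A c l'" "\<beta> \<bullet> l \<le> \<beta> \<bullet> l'"
    "dim ((\<lambda>j. column j A) ` {j. column j A \<bullet> l' = c $ j}) = CARD('m)"
proof -
  define tight where "tight l' = {j. column j A \<bullet> l' = c $ j}" for l'
  define Q where "Q l' \<longleftrightarrow> dual_feasible A c l' \<and> \<beta> \<bullet> l \<le> \<beta> \<bullet> l'" for l'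
  obtain l0 where l0: "Q l0" and max: "\<forall>l'. Q l' \<longrightarrow> card (tight l') \<le> card (tight l0)"
    using ex_has_greatest_nat[of Q l "\<lambda>l'. card (tight l')" "CARD('d) + 1"] l
    by (auto simp: Q_def le_imp_less_Suc card_mono)
  have l0f: "dual_feasible A c l0" "\<beta> \<bullet> l \<le> \<beta> \<bullet> l0" using l0 by (simp_all add: Q_def)
  have "dim ((\<lambda>j. column j A) ` tight l0) = CARD('m)"
  proof (rule ccontr)
    assume "dim ((\<lambda>j. column j A) ` tight l0) \<noteq> CARD('m)"
    moreover have "dim ((\<lambda>j. column j A) ` tight l0) \<le> CARD('m)"
      using dim_subset_UNIV[of "(\<lambda>j. column j A) ` tight l0"] by simp
    ultimately have "dim ((\<lambda>j. column j A) ` tight l0) < CARD('m)" by simp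
    then obtain s where s: "\<forall>j\<in>tight l0. column j A \<bullet> s = 0" "0 \<le> \<beta> \<bullet> s"
      "\<exists>j. 0 < column j A \<bullet> s"
      by (rule dual_ascent_direction[OF full pf])
    obtain l1 k where l1: "dual_feasible A c l1" "\<beta> \<bullet> l0 \<le> \<beta> \<bullet> l1" "0 < column k A \<bullet> s"
      "column k A \<bullet> l1 = c $ k" "\<forall>j. column j A \<bullet> s = 0 \<longrightarrow> column j A \<bullet> l1 = column j A \<bullet> l0"
      by (rule dual_ratio_step[OF l0f(1) s(2,3)])
    have "Q l1" using l1(1,2) l0f(2) by (simp add: Q_def)
    have "k \<notin> tight l0" using s(1) l1(3) by auto
    then have "card (tight l0) < card (insert k (tight l0))" by simp
    also have "\<dots> \<le> card (tight l1)"
      using s(1) l1(4,5) by (intro card_mono) (auto simp: tight_def)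
    finally show False using max \<open>Q l1\<close> by force
  qed
  then show thesis using l0f by (intro that[of l0]) (auto simp: tight_def)
qed

lemma dual_feasible_basis_above:
  fixes A :: "real^'d^'m"
  assumes full: "rank A = CARD('m)" and pf: "primal_feasible A \<beta> x" and l: "dual_feasible A c l"
  obtains J where "is_basis A J" "dual_feasible A c (basic_dual A c J)"
    "\<beta> \<bullet> l \<le> \<beta> \<bullet> basic_dual A c J"
proof -
  obtain l' where l': "dual_feasible A c l'" "\<beta> \<bullet> l \<le> \<beta> \<bullet> l'"
    "dim ((\<lambda>j. column j A) ` {j. column j A \<bullet> l' = c $ j}) = CARD('m)"
    by (rule dual_vertex_above[OF full pf l])
  have "independent_columns A {}" by (simp add: independent_columns_def vec_eq_iff)
  then obtain J where J: "is_basis A J" "J \<subseteq> {j. column j A \<bullet> l' = c $ j}"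
    by (rule extend_to_basis[OF _ _ l'(3)]) simp
  have "basic_dual A c J = l'" using J by (intro basic_dual_unique) auto
  then show thesis using J l' by (intro that[of J]) auto
qed

text \<open>Dual values come arbitrarily close to the optimal value, and the finitely many dual
  feasible basic solutions dominate all of them.\<close>

lemma strong_duality_basis:
  fixes A :: "real^'d^'m"
  assumes full: "rank A = CARD('m)" and opt: "primal_optimal A c \<beta> xs"
  obtains J where "is_basis A J" "dual_feasible A c (basic_dual A c J)"
    "\<beta> \<bullet> basic_dual A c J = c \<bullet> xs"
proof -
  have xsf: "primal_feasible A \<beta> xs" using opt by (simp add: primal_optimal_def)
  define F where "F = {J. is_basis A J \<and> dual_feasible A c (basic_dual A c J)}"
  have finF: "finite F" by (rule finite_subset[OF subset_UNIV]) simp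
  have "\<exists>J\<in>F. c \<bullet> xs \<le> \<beta> \<bullet> basic_dual A c J"
  proof (rule ccontr)
    assume below: "\<not> ?thesis"
    define t0 where "t0 = Max (insert (c \<bullet> xs - 1) ((\<lambda>J. \<beta> \<bullet> basic_dual A c J) ` F))"
    have "t0 < c \<bullet> xs" using below finF by (auto simp: t0_def not_le)
    then obtain l where l: "dual_feasible A c l" "t0 < \<beta> \<bullet> l"
      by (rule exists_dual_feasible_above[OF opt])
    obtain J where J: "is_basis A J" "dual_feasible A c (basic_dual A c J)"
      "\<beta> \<bullet> l \<le> \<beta> \<bullet> basic_dual A c J"
      by (rule dual_feasible_basis_above[OF full xsf l(1)])
    then have "\<beta> \<bullet> basic_dual A c J \<le> t0" using finF by (auto simp: t0_def F_def)
    then show False using J(3) l(2) by simp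
  qed
  then obtain J where J: "J \<in> F" "c \<bullet> xs \<le> \<beta> \<bullet> basic_dual A c J" by blast
  moreover have "\<beta> \<bullet> basic_dual A c J \<le> c \<bullet> xs" using J weak_duality[OF xsf] by (simp add: F_def)
  ultimately show thesis using that[of J] by (simp add: F_def)
qed

lemma complementary_slackness:
  fixes A :: "real^'d^'m"
  assumes x: "primal_feasible A \<beta> x" and l: "dual_feasible A c l" and eq: "\<beta> \<bullet> l = c \<bullet> x"
    and j: "x $ j \<noteq> 0"
  shows "column j A \<bullet> l = c $ j"
proof -
  have "\<beta> \<bullet> l = (\<Sum>j\<in>UNIV. x $ j * (column j A \<bullet> l))"
    using x inner_matrix_vector_mult[of A x l] by (simp add: primal_feasible_def)
  moreover have "c \<bullet> x = (\<Sum>j\<in>UNIV. x $ j * c $ j)" by (simp add: inner_vec_def mult.commute)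
  ultimately have "(\<Sum>j\<in>UNIV. x $ j * (c $ j - column j A \<bullet> l)) = c \<bullet> x - \<beta> \<bullet> l"
    by (simp add: right_diff_distrib sum_subtractf)
  also have "\<dots> = 0" using eq by simp
  finally have "\<forall>j\<in>UNIV. x $ j * (c $ j - column j A \<bullet> l) = 0"
    using x l by (subst sum_nonneg_eq_0_iff[symmetric])
      (auto simp: primal_feasible_def dual_feasible_iff_columns)
  then show ?thesis using j by (metis mult_eq_0_iff right_minus_eq UNIV_I)
qed

text \<open>An optimal solution is supported by the tight columns of a dual optimal basis \<open>Js\<close>; reduce
  its support and extend it to a basis \<open>J\<close> inside these columns, so that \<open>\<lambda>(J) = \<lambda>(Js)\<close>.\<close>

lemma optimal_basis_exists:
  fixes A :: "real^'d^'m"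
  assumes full: "rank A = CARD('m)" and pf: "primal_feasible A \<beta> x" and df: "dual_feasible A c l"
  obtains J where "is_basis A J" "dual_feasible A c (basic_dual A c J)"
    "\<forall>j. 0 \<le> basic_primal A J \<beta> $ j" "opt_value A c \<beta> = \<beta> \<bullet> basic_dual A c J"
proof -
  obtain xs where opt: "primal_optimal A c \<beta> xs"
    using has_optimal_if_feasible[OF pf df] by (auto simp: has_optimal_def)
  then have xsf: "primal_feasible A \<beta> xs" by (simp add: primal_optimal_def)
  obtain Js where Js: "is_basis A Js" "dual_feasible A c (basic_dual A c Js)"
    "\<beta> \<bullet> basic_dual A c Js = c \<bullet> xs"
    by (rule strong_duality_basis[OF full opt])
  define T where "T = {j. column j A \<bullet> basic_dual A c Js = c $ j}"
  have "Js \<subseteq> T" using basic_dual_solution[OF Js(1)] by (auto simp: T_def)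
  then have "span ((\<lambda>j. column j A) ` T) = UNIV"
    using span_mono[OF image_mono, of Js T "\<lambda>j. column j A"] span_basis_columns[OF Js(1)] by auto
  then have dimT: "dim ((\<lambda>j. column j A) ` T) = CARD('m)"
    using dim_eq_full[of "(\<lambda>j. column j A) ` T"] by simp
  have "\<forall>j. 0 \<le> xs $ j" "A *v xs = \<beta>" using xsf by (simp_all add: primal_feasible_def)
  moreover have "\<forall>j. j \<notin> T \<longrightarrow> xs $ j = 0"
    using complementary_slackness[OF xsf Js(2,3)] by (auto simp: T_def)
  ultimately obtain x' where x': "\<forall>j. 0 \<le> x' $ j" "A *v x' = \<beta>" "\<forall>j. j \<notin> T \<longrightarrow> x' $ j = 0"
    "independent_columns A {j. x' $ j \<noteq> 0}"
    by (rule nonneg_solution_with_independent_support)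
  obtain J where J: "is_basis A J" "{j. x' $ j \<noteq> 0} \<subseteq> J" "J \<subseteq> T"
    by (rule extend_to_basis[OF x'(4) _ dimT]) (use x'(3) in auto)
  have "basic_dual A c J = basic_dual A c Js"
    using J by (intro basic_dual_unique) (auto simp: T_def)
  moreover have "basic_primal A J \<beta> = x'" using J x' by (intro basic_primal_unique) auto
  ultimately show thesis
    using that[of J] J(1) Js x'(1) opt_value_eq_primal_optimal[OF opt] by simp
qed

section \<open>The optimal value near \<open>b\<close>\<close>

lemma finite_optimal_bases: "finite (optimal_bases A b c)"
  for A :: "real^'d^'m"
  by (rule finite_subset[OF subset_UNIV]) simp

lemma optimal_basesD:
  fixes A :: "real^'d^'m"
  assumes "I \<in> optimal_bases A b c"
  shows "primal_optimal A c b (basic_primal A I b)" "opt_value A c b = b \<bullet> basic_dual A c I"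
    "dual_optimal A c b (basic_dual A c I)"
proof -
  have I: "is_basis A I" "dual_feasible A c (basic_dual A c I)" "\<forall>j. 0 \<le> basic_primal A I b $ j"
    using assms by (auto simp: optimal_bases_def)
  have pf: "primal_feasible A b (basic_primal A I b)"
    using I(3) basic_primal_solution(2)[OF I(1)] by (simp add: primal_feasible_def)
  have val: "c \<bullet> basic_primal A I b = b \<bullet> basic_dual A c I"
    by (rule basic_primal_dual_same_value[OF I(1)])
  show po: "primal_optimal A c b (basic_primal A I b)"
    unfolding primal_optimal_def using pf val weak_duality[OF _ I(2)] by auto
  show "opt_value A c b = b \<bullet> basic_dual A c I" using opt_value_eq_primal_optimal[OF po] val by simp
  show "dual_optimal A c b (basic_dual A c I)"
    unfolding dual_optimal_def using I(2) val weak_duality[OF pf, of c] by auto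
qed

lemma optimal_bases_nonempty:
  fixes A :: "real^'d^'m"
  assumes full: "rank A = CARD('m)" and opt: "primal_optimal A c b xs"
  shows "optimal_bases A b c \<noteq> {}"
proof -
  obtain l where l: "dual_feasible A c l" by (rule exists_dual_feasible[OF opt])
  have "primal_feasible A b xs" using opt by (simp add: primal_optimal_def)
  then obtain J where "is_basis A J" "dual_feasible A c (basic_dual A c J)"
    "\<forall>j. 0 \<le> basic_primal A J b $ j" "opt_value A c b = b \<bullet> basic_dual A c J"
    by (rule optimal_basis_exists[OF full _ l])
  then show ?thesis by (auto simp: optimal_bases_def)
qed

lemma dual_optimal_value:
  fixes A :: "real^'d^'m"
  assumes full: "rank A = CARD('m)" and opt: "primal_optimal A c b xs" and l: "dual_optimal A c b l"
  shows "b \<bullet> l = opt_value A c b"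
proof (rule antisym)
  show "b \<bullet> l \<le> opt_value A c b"
    using l opt weak_duality opt_value_eq_primal_optimal[OF opt]
    by (auto simp: dual_optimal_def primal_optimal_def)
  obtain I where I: "I \<in> optimal_bases A b c" using optimal_bases_nonempty[OF full opt] by blast
  then show "opt_value A c b \<le> b \<bullet> l"
    using optimal_basesD[OF I] l by (auto simp: dual_optimal_def)
qed

lemma continuous_on_Max_image:
  fixes f :: "'i \<Rightarrow> 'a::topological_space \<Rightarrow> 'b::linorder_topology"
  assumes "finite I" "\<And>i. i \<in> I \<Longrightarrow> continuous_on S (f i)"
  shows "continuous_on S (\<lambda>x. Max ((\<lambda>i. f i x) ` I))"
proof (cases "I = {}")
  case False
  from assms(1) this assms(2) show ?thesis
  proof (induction I rule: finite_ne_induct)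
    case (insert i F)
    then have "continuous_on S (\<lambda>x. Max ((\<lambda>i. f i x) ` F))" by blast
    then show ?case using insert by (simp add: continuous_on_max)
  qed simp
qed simp

text \<open>\<open>max\<^sub>k g\<cdot>\<lambda>(I\<^sub>k)\<close>, the directional derivative of the optimal value at \<open>b\<close>.\<close>

definition max_optimal_dual :: "real^'d^'m \<Rightarrow> real^'m \<Rightarrow> real^'d \<Rightarrow> real^'m \<Rightarrow> real" where
  "max_optimal_dual A b c g = Max ((\<lambda>I. g \<bullet> basic_dual A c I) ` optimal_bases A b c)"

lemma continuous_on_max_optimal_dual: "continuous_on S (max_optimal_dual A b c)"
  for A :: "real^'d^'m"
  unfolding max_optimal_dual_def[abs_def]
  by (rule continuous_on_Max_image[OF finite_optimal_bases]) (intro continuous_intros)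

lemma max_optimal_dual_scaleR:
  fixes A :: "real^'d^'m"
  assumes "optimal_bases A b c \<noteq> {}" "0 \<le> r"
  shows "max_optimal_dual A b c (r *\<^sub>R g) = r * max_optimal_dual A b c g"
proof -
  have "mono ((*) r)" using assms(2) by (simp add: mono_def mult_left_mono)
  then show ?thesis
    unfolding max_optimal_dual_def
    using assms(1) finite_optimal_bases by (simp add: mono_Max_commute image_image)
qed

lemma max_optimal_dual_add_rhs:
  fixes A :: "real^'d^'m"
  assumes full: "rank A = CARD('m)" and opt: "primal_optimal A c b xs"
  shows "max_optimal_dual A b c (g + b) = max_optimal_dual A b c g + opt_value A c b"
proof -
  have "(\<lambda>I. (g + b) \<bullet> basic_dual A c I) ` optimal_bases A b c
      = (\<lambda>I. g \<bullet> basic_dual A c I + opt_value A c b) ` optimal_bases A b c"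
  proof (rule image_cong[OF refl])
    fix I assume "I \<in> optimal_bases A b c"
    then show "(g + b) \<bullet> basic_dual A c I = g \<bullet> basic_dual A c I + opt_value A c b"
      by (simp add: inner_add_left optimal_basesD(2))
  qed
  then show ?thesis
    unfolding max_optimal_dual_def
    using Max_add_commute[OF finite_optimal_bases optimal_bases_nonempty[OF full opt]] by simp
qed

lemma eventually_nhds_basic_primal_nonneg:
  fixes A :: "real^'d^'m"
  shows "eventually (\<lambda>\<beta>. \<forall>J. is_basis A J \<and> (\<forall>j. 0 \<le> basic_primal A J \<beta> $ j)
    \<longrightarrow> (\<forall>j. 0 \<le> basic_primal A J b $ j)) (nhds b)"
proof -
  define B where "B = {J. is_basis A J \<and> \<not> (\<forall>j. 0 \<le> basic_primal A J b $ j)}"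
  have "eventually (\<lambda>\<beta>. \<exists>j. basic_primal A J \<beta> $ j < 0) (nhds b)" if JB: "J \<in> B" for J
  proof -
    obtain j where j: "basic_primal A J b $ j < 0" and J: "is_basis A J"
      using JB by (auto simp: B_def not_le)
    have "isCont (basic_primal A J) b"
      using linear_basic_primal[OF J] by (simp add: linear_conv_bounded_linear linear_continuous_at)
    then have "isCont (\<lambda>\<beta>. basic_primal A J \<beta> $ j) b" by (intro continuous_intros)
    then have "((\<lambda>\<beta>. basic_primal A J \<beta> $ j) \<longlongrightarrow> basic_primal A J b $ j) (nhds b)"
      unfolding isCont_def by (rule tendsto_at_iff_tendsto_nhds[THEN iffD1])
    from order_tendstoD(2)[OF this j] show ?thesis by (rule eventually_mono) blast
  qed
  then have "eventually (\<lambda>\<beta>. \<forall>J\<in>B. \<exists>j. basic_primal A J \<beta> $ j < 0) (nhds b)"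
    by (intro eventually_ball_finite) (auto intro: finite_subset[OF subset_UNIV])
  then show ?thesis by (rule eventually_mono) (auto simp: B_def not_le, meson not_le)
qed

text \<open>Near \<open>b\<close>, an optimal basis of \<open>(P\<^sub>\<beta>)\<close> is an optimal basis of \<open>(P\<^sub>b)\<close> as well.\<close>

lemma opt_value_eventually_eq_max_optimal_dual:
  fixes A :: "real^'d^'m"
  assumes full: "rank A = CARD('m)" and opt: "primal_optimal A c b xs"
  shows "eventually (\<lambda>\<beta>. has_optimal A c \<beta> \<longrightarrow> opt_value A c \<beta> = max_optimal_dual A b c \<beta>) (nhds b)"
  using eventually_nhds_basic_primal_nonneg[of A b]
proof eventually_elim
  case (elim \<beta>)
  show ?case
  proof
    assume "has_optimal A c \<beta>"
    then obtain xo where xo: "primal_optimal A c \<beta> xo" by (auto simp: has_optimal_def)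
    then have pf: "primal_feasible A \<beta> xo" by (simp add: primal_optimal_def)
    obtain l where l: "dual_feasible A c l" by (rule exists_dual_feasible[OF opt])
    obtain J where J: "is_basis A J" "dual_feasible A c (basic_dual A c J)"
      "\<forall>j. 0 \<le> basic_primal A J \<beta> $ j" "opt_value A c \<beta> = \<beta> \<bullet> basic_dual A c J"
      by (rule optimal_basis_exists[OF full pf l])
    then have "J \<in> optimal_bases A b c" using elim by (auto simp: optimal_bases_def)
    then have "opt_value A c \<beta> \<le> max_optimal_dual A b c \<beta>"
      unfolding max_optimal_dual_def J(4) using finite_optimal_bases by simp
    moreover have "max_optimal_dual A b c \<beta> \<le> opt_value A c \<beta>"
      unfolding max_optimal_dual_def opt_value_eq_primal_optimal[OF xo]
      using \<open>J \<in> optimal_bases A b c\<close> finite_optimal_bases weak_duality[OF pf]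
      by (auto simp: optimal_bases_def intro!: Max.boundedI)
    ultimately show "opt_value A c \<beta> = max_optimal_dual A b c \<beta>" by simp
  qed
qed

lemma has_optimal_iff_in_cone:
  fixes A :: "real^'d^'m"
  assumes "dual_feasible A c l"
  shows "has_optimal A c \<beta> \<longleftrightarrow> \<beta> \<in> (*v) A ` nonneg_orthant"
proof
  assume "has_optimal A c \<beta>"
  then show "\<beta> \<in> (*v) A ` nonneg_orthant"
    by (auto simp: has_optimal_def primal_optimal_def primal_feasible_def nonneg_orthant_def)
next
  assume "\<beta> \<in> (*v) A ` nonneg_orthant"
  then obtain x where "primal_feasible A \<beta> x"
    by (auto simp: primal_feasible_def nonneg_orthant_def)
  then show "has_optimal A c \<beta>" using has_optimal_if_feasible assms by blast
qed

lemma closed_has_optimal: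
  fixes A :: "real^'d^'m"
  assumes "dual_feasible A c l"
  shows "closed {\<beta>. has_optimal A c \<beta>}"
proof -
  have "{\<beta>. has_optimal A c \<beta>} = (*v) A ` nonneg_orthant"
    using has_optimal_iff_in_cone[OF assms] by auto
  then show ?thesis using closed_linear_image_nonneg_orthant[OF matrix_vector_mul_linear] by simp
qed

lemma opt_value_eq_Max_dual_feasible_bases:
  fixes A :: "real^'d^'m"
  assumes full: "rank A = CARD('m)" and "has_optimal A c \<beta>"
  shows "opt_value A c \<beta> = Max ((\<lambda>J. \<beta> \<bullet> basic_dual A c J) `
    {J. is_basis A J \<and> dual_feasible A c (basic_dual A c J)})"
proof -
  obtain xo where xo: "primal_optimal A c \<beta> xo" using assms(2) by (auto simp: has_optimal_def)
  then have pf: "primal_feasible A \<beta> xo" by (simp add: primal_optimal_def)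
  obtain l where l: "dual_feasible A c l" by (rule exists_dual_feasible[OF xo])
  obtain J where J: "is_basis A J" "dual_feasible A c (basic_dual A c J)"
    "\<forall>j. 0 \<le> basic_primal A J \<beta> $ j" "opt_value A c \<beta> = \<beta> \<bullet> basic_dual A c J"
    by (rule optimal_basis_exists[OF full pf l])
  have fin: "finite {J. is_basis A J \<and> dual_feasible A c (basic_dual A c J)}"
    by (rule finite_subset[OF subset_UNIV]) simp
  show ?thesis
  proof (rule antisym)
    show "opt_value A c \<beta> \<le> Max ((\<lambda>J. \<beta> \<bullet> basic_dual A c J) `
        {J. is_basis A J \<and> dual_feasible A c (basic_dual A c J)})"
      unfolding J(4) using J(1,2) fin by (intro Max_ge) auto
    show "Max ((\<lambda>J. \<beta> \<bullet> basic_dual A c J) `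
        {J. is_basis A J \<and> dual_feasible A c (basic_dual A c J)}) \<le> opt_value A c \<beta>"
      unfolding opt_value_eq_primal_optimal[OF xo]
      using J(1,2) fin weak_duality[OF pf] by (auto intro!: Max.boundedI)
  qed
qed

lemma borel_measurable_opt_value:
  fixes A :: "real^'d^'m"
  assumes full: "rank A = CARD('m)" and l: "dual_feasible A c l"
  shows "opt_value A c \<in> borel_measurable borel"
proof -
  define \<phi> where "\<phi> \<beta> = Max ((\<lambda>J. \<beta> \<bullet> basic_dual A c J) `
    {J. is_basis A J \<and> dual_feasible A c (basic_dual A c J)})" for \<beta>
  have eq: "opt_value A c = (\<lambda>\<beta>. if \<beta> \<in> {\<beta>. has_optimal A c \<beta>} then \<phi> \<beta> else Inf {})"
  proof
    fix \<beta> show "opt_value A c \<beta> = (if \<beta> \<in> {\<beta>. has_optimal A c \<beta>} then \<phi> \<beta> else Inf {})"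
    proof (cases "has_optimal A c \<beta>")
      case False
      then have "{c \<bullet> x | x. primal_feasible A \<beta> x} = {}" using has_optimal_if_feasible[OF _ l] by blast
      then show ?thesis using False by (simp add: opt_value_def)
    qed (simp add: \<phi>_def opt_value_eq_Max_dual_feasible_bases[OF full])
  qed
  have "\<phi> \<in> borel_measurable borel"
    unfolding \<phi>_def[abs_def]
    by (intro borel_measurable_continuous_onI continuous_on_Max_image)
      (auto intro: finite_subset[OF subset_UNIV] continuous_intros)
  moreover have "{\<beta>. has_optimal A c \<beta>} \<in> sets borel"
    using closed_has_optimal[OF l] by (rule borel_closed)
  ultimately show ?thesis unfolding eq by (intro measurable_If_set) auto
qed

lemma closed_dual_optimal_dominated:
  fixes A :: "real^'d^'m"
  shows "closed {g. \<forall>l. dual_optimal A c b l \<longrightarrow> g \<bullet> l \<le> max_optimal_dual A b c g}"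
proof -
  have "{g. \<forall>l. dual_optimal A c b l \<longrightarrow> g \<bullet> l \<le> max_optimal_dual A b c g}
      = (\<Inter>l\<in>{l. dual_optimal A c b l}. {g. g \<bullet> l \<le> max_optimal_dual A b c g})" by auto
  then show ?thesis
    by (auto intro!: closed_INT closed_Collect_le continuous_intros continuous_on_max_optimal_dual)
qed

lemma opt_value_local_expansion:
  fixes A :: "real^'d^'m"
  assumes full: "rank A = CARD('m)" and opt: "primal_optimal A c b xs"
  shows "eventually (\<lambda>\<beta>. has_optimal A c \<beta> \<longrightarrow> (\<forall>r\<ge>0.
      r * (opt_value A c \<beta> - opt_value A c b) = max_optimal_dual A b c (r *\<^sub>R (\<beta> - b)) \<and>
      (\<forall>l. dual_optimal A c b l \<longrightarrow> (r *\<^sub>R (\<beta> - b)) \<bullet> l \<le> max_optimal_dual A b c (r *\<^sub>R (\<beta> - b)))))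
    (nhds b)"
  using opt_value_eventually_eq_max_optimal_dual[OF full opt]
proof eventually_elim
  case (elim \<beta>)
  show ?case
  proof (intro impI allI conjI)
    fix r :: real assume \<beta>: "has_optimal A c \<beta>" and r: "0 \<le> r"
    have scale: "max_optimal_dual A b c (r *\<^sub>R (\<beta> - b)) = r * max_optimal_dual A b c (\<beta> - b)"
      by (rule max_optimal_dual_scaleR[OF optimal_bases_nonempty[OF full opt] r])
    have eq: "opt_value A c \<beta> - opt_value A c b = max_optimal_dual A b c (\<beta> - b)"
      using elim \<beta> max_optimal_dual_add_rhs[OF full opt, of "\<beta> - b"] by simp
    then show "r * (opt_value A c \<beta> - opt_value A c b) = max_optimal_dual A b c (r *\<^sub>R (\<beta> - b))"
      by (simp add: scale)
    fix l assume l: "dual_optimal A c b l"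
    obtain xo where xo: "primal_optimal A c \<beta> xo" using \<beta> by (auto simp: has_optimal_def)
    have "\<beta> \<bullet> l \<le> opt_value A c \<beta>"
      using l xo weak_duality opt_value_eq_primal_optimal[OF xo]
      by (auto simp: dual_optimal_def primal_optimal_def)
    then have "(\<beta> - b) \<bullet> l \<le> max_optimal_dual A b c (\<beta> - b)"
      using eq dual_optimal_value[OF full opt l] by (simp add: inner_diff_left)
    then show "(r *\<^sub>R (\<beta> - b)) \<bullet> l \<le> max_optimal_dual A b c (r *\<^sub>R (\<beta> - b))"
      using r by (simp add: scale mult_left_mono)
  qed
qed

lemma max_optimal_dual_eq_SUP:
  fixes A :: "real^'d^'m"
  assumes ne: "optimal_bases A b c \<noteq> {}"
    and dom: "\<forall>l. dual_optimal A c b l \<longrightarrow> g \<bullet> l \<le> max_optimal_dual A b c g"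
  shows "ereal (max_optimal_dual A b c g) = (SUP l \<in> {l. dual_optimal A c b l}. ereal (g \<bullet> l))"
proof (rule antisym)
  have "max_optimal_dual A b c g \<in> (\<lambda>I. g \<bullet> basic_dual A c I) ` optimal_bases A b c"
    unfolding max_optimal_dual_def using ne finite_optimal_bases by (intro Max_in) auto
  then obtain I where I: "I \<in> optimal_bases A b c" "max_optimal_dual A b c g = g \<bullet> basic_dual A c I"
    by blast
  then show "ereal (max_optimal_dual A b c g) \<le> (SUP l \<in> {l. dual_optimal A c b l}. ereal (g \<bullet> l))"
    using optimal_basesD(3)[OF I(1)] by (auto intro: SUP_upper2)
  show "(SUP l \<in> {l. dual_optimal A c b l}. ereal (g \<bullet> l)) \<le> ereal (max_optimal_dual A b c g)"
    using dom by (intro SUP_least) auto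
qed

section \<open>Convergence in distribution\<close>

lemma (in finite_measure) integrable_bounded_real:
  fixes f :: "'a \<Rightarrow> real"
  assumes "f \<in> borel_measurable M" "\<And>x. \<bar>f x\<bar> \<le> K"
  shows "integrable M f"
  using assms by (intro integrable_const_bound[of _ K]) auto

lemma integral_norm_excess_tendsto_0:
  fixes G :: "'b \<Rightarrow> 'e::euclidean_space"
  assumes "prob_space N" "G \<in> borel_measurable N"
  shows "(\<lambda>k. \<integral>\<omega>. min 1 (max 0 (norm (G \<omega>) - real k)) \<partial>N) \<longlonglongrightarrow> 0"
proof -
  interpret N: prob_space N by fact
  have "(\<lambda>k. \<integral>\<omega>. min 1 (max 0 (norm (G \<omega>) - real k)) \<partial>N) \<longlonglongrightarrow> (\<integral>\<omega>. 0 \<partial>N)"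
  proof (rule integral_dominated_convergence[where w="\<lambda>_. 1"])
    show "(\<lambda>\<omega>. min 1 (max 0 (norm (G \<omega>) - real k))) \<in> borel_measurable N" for k
      using assms(2) by measurable
    show "AE \<omega> in N. (\<lambda>k. min 1 (max 0 (norm (G \<omega>) - real k))) \<longlonglongrightarrow> 0"
    proof (rule AE_I2)
      fix \<omega>
      obtain k0 :: nat where "norm (G \<omega>) \<le> real k0" using real_arch_simple by blast
      then have "eventually (\<lambda>k. min 1 (max 0 (norm (G \<omega>) - real k)) = 0) sequentially"
        unfolding eventually_sequentially by (intro exI[of _ k0]) auto
      then show "(\<lambda>k. min 1 (max 0 (norm (G \<omega>) - real k))) \<longlonglongrightarrow> 0" by (rule tendsto_eventually)
    qed
  qed auto
  then show ?thesis by simp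
qed

lemma conv_in_distr_norm_ge_tendsto_0:
  fixes Z :: "nat \<Rightarrow> 'a \<Rightarrow> 'e::euclidean_space" and G :: "'b \<Rightarrow> 'e"
  assumes M: "prob_space M" and N: "prob_space N"
    and Zm: "\<And>n. Z n \<in> borel_measurable M" and Gm: "G \<in> borel_measurable N"
    and conv: "conv_in_distr M Z N G" and R: "filterlim R at_top sequentially"
  shows "(\<lambda>n. measure M {\<omega>\<in>space M. R n \<le> norm (Z n \<omega>)}) \<longlonglongrightarrow> 0"
proof -
  interpret M: prob_space M by fact
  \<comment> \<open>a continuous bounded majorant of the indicator of \<open>{g. real k + 1 \<le> norm g}\<close>\<close>
  define f where "f k g = min 1 (max 0 (norm g - real k))" for k :: nat and g :: 'e
  have f01: "0 \<le> f k g" "f k g \<le> 1" for k g by (auto simp: f_def)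
  have fm: "(\<lambda>\<omega>. f k (Z n \<omega>)) \<in> borel_measurable M" for k n
    unfolding f_def using Zm by measurable
  have conv_k: "(\<lambda>n. \<integral>\<omega>. f k (Z n \<omega>) \<partial>M) \<longlonglongrightarrow> (\<integral>\<omega>. f k (G \<omega>) \<partial>N)" for k
  proof -
    have "continuous_on UNIV (f k)" unfolding f_def by (intro continuous_intros)
    moreover have "bounded (range (f k))"
      unfolding bounded_iff using f01 by (intro exI[of _ 1]) auto
    ultimately show ?thesis using conv by (simp add: conv_in_distr_def)
  qed
  have le: "measure M {\<omega>\<in>space M. R n \<le> norm (Z n \<omega>)} \<le> (\<integral>\<omega>. f k (Z n \<omega>) \<partial>M)"
    if kn: "real k + 1 \<le> R n" for k n
  proof -
    have "{\<omega>\<in>space M. R n \<le> norm (Z n \<omega>)} \<subseteq> {\<omega>\<in>space M. 1 \<le> f k (Z n \<omega>)}"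
      using kn by (auto simp: f_def)
    then have "measure M {\<omega>\<in>space M. R n \<le> norm (Z n \<omega>)} \<le> measure M {\<omega>\<in>space M. 1 \<le> f k (Z n \<omega>)}"
      using fm[of k n] by (intro M.finite_measure_mono) measurable
    also have "\<dots> \<le> (\<integral>\<omega>. f k (Z n \<omega>) \<partial>M)"
      using integral_Markov_inequality_measure[where u="\<lambda>\<omega>. f k (Z n \<omega>)" and c=1, OF _ sets.top]
        f01 M.integrable_bounded_real[OF fm, of k n 1]
      by simp
    finally show ?thesis .
  qed
  show ?thesis
  proof (rule tendstoI)
    fix e :: real assume "e > 0"
    from order_tendstoD(2)[OF integral_norm_excess_tendsto_0[OF N Gm] this]
    obtain k where "(\<integral>\<omega>. f k (G \<omega>) \<partial>N) < e" by (auto simp: eventually_sequentially f_def)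
    from order_tendstoD(2)[OF conv_k this]
    have "eventually (\<lambda>n. (\<integral>\<omega>. f k (Z n \<omega>) \<partial>M) < e) sequentially" .
    moreover have "eventually (\<lambda>n. real k + 1 \<le> R n) sequentially"
      using R by (simp add: filterlim_at_top)
    ultimately show "eventually (\<lambda>n. dist (measure M {\<omega>\<in>space M. R n \<le> norm (Z n \<omega>)}) 0 < e) sequentially"
    proof eventually_elim
      case (elim n)
      then show ?case using le[OF elim(2)] by (simp add: dist_real_def)
    qed
  qed
qed

lemma abs_integral_le_measure_exceptional:
  fixes f :: "'a \<Rightarrow> real"
  assumes "prob_space M" "f \<in> borel_measurable M" "Bad \<in> sets M"
    and "\<And>\<omega>. \<bar>f \<omega>\<bar> \<le> K" "\<And>\<omega>. \<omega> \<in> space M - Bad \<Longrightarrow> f \<omega> = 0"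
  shows "\<bar>\<integral>\<omega>. f \<omega> \<partial>M\<bar> \<le> K * measure M Bad"
proof -
  interpret M: prob_space M by fact
  have "\<bar>\<integral>\<omega>. f \<omega> \<partial>M\<bar> \<le> (\<integral>\<omega>. \<bar>f \<omega>\<bar> \<partial>M)"
    using integral_norm_bound[of M f] by simp
  also have "\<dots> \<le> (\<integral>\<omega>. K * indicator Bad \<omega> \<partial>M)"
  proof (rule integral_mono)
    show "integrable M (\<lambda>\<omega>. \<bar>f \<omega>\<bar>)"
      using assms(2,4) by (intro M.integrable_bounded_real[of _ K]) auto
    show "integrable M (\<lambda>\<omega>. K * indicator Bad \<omega>)"
      using assms(3) by (intro integrable_mult_right M.integrable_bounded_real[of _ 1])
        (auto simp: indicator_def)
    show "\<bar>f \<omega>\<bar> \<le> K * indicator Bad \<omega>" if "\<omega> \<in> space M" for \<omega>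
      using that assms(4,5)[of \<omega>] by (cases "\<omega> \<in> Bad") auto
  qed
  also have "\<dots> = K * measure M Bad"
    using assms(3) sets.sets_into_space[OF assms(3)] by (simp add: Int_absorb2)
  finally show ?thesis .
qed

lemma conv_in_distr_AE_closed:
  fixes Z :: "nat \<Rightarrow> 'a \<Rightarrow> 'e::euclidean_space" and G :: "'b \<Rightarrow> 'e"
  assumes M: "prob_space M" and N: "prob_space N"
    and Zm: "\<And>n. Z n \<in> borel_measurable M" and Gm: "G \<in> borel_measurable N"
    and conv: "conv_in_distr M Z N G" and W: "closed W" "W \<noteq> {}"
    and Bad: "\<And>n. Bad n \<in> sets M" "(\<lambda>n. measure M (Bad n)) \<longlonglongrightarrow> 0"
    and good: "eventually (\<lambda>n. \<forall>\<omega>\<in>space M - Bad n. Z n \<omega> \<in> W) sequentially"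
  shows "AE \<omega> in N. G \<omega> \<in> W"
proof -
  interpret N: prob_space N by fact
  \<comment> \<open>bounded, continuous, and zero exactly on the closed set \<open>W\<close>\<close>
  define f where "f g = min 1 (infdist g W)" for g :: 'e
  have f01: "0 \<le> f g" "f g \<le> 1" for g by (auto simp: f_def infdist_nonneg)
  have fc: "continuous_on UNIV f" unfolding f_def by (intro continuous_intros)
  then have fm: "f \<in> borel_measurable borel" by (rule borel_measurable_continuous_onI)
  have "bounded (range f)" unfolding bounded_iff using f01 by (intro exI[of _ 1]) auto
  then have lim: "(\<lambda>n. \<integral>\<omega>. f (Z n \<omega>) \<partial>M) \<longlonglongrightarrow> (\<integral>\<omega>. f (G \<omega>) \<partial>N)"
    using conv fc by (simp add: conv_in_distr_def)
  have "(\<lambda>n. \<integral>\<omega>. f (Z n \<omega>) \<partial>M) \<longlonglongrightarrow> 0"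
  proof (rule Lim_null_comparison[OF _ Bad(2)])
    show "eventually (\<lambda>n. norm (\<integral>\<omega>. f (Z n \<omega>) \<partial>M) \<le> measure M (Bad n)) sequentially"
      using good
    proof eventually_elim
      case (elim n)
      have "f (Z n \<omega>) = 0" if "\<omega> \<in> space M - Bad n" for \<omega>
        using elim that by (simp add: f_def)
      then show ?case
        using abs_integral_le_measure_exceptional[OF M measurable_compose[OF Zm[of n] fm] Bad(1)[of n],
            where K=1] f01
        by simp
    qed
  qed
  then have "(\<integral>\<omega>. f (G \<omega>) \<partial>N) = 0" using LIMSEQ_unique[OF lim] by blast
  moreover have "integrable N (\<lambda>\<omega>. f (G \<omega>))"
    using f01 by (intro N.integrable_bounded_real[OF measurable_compose[OF Gm fm], of 1]) auto
  ultimately have "AE \<omega> in N. f (G \<omega>) = 0" using integral_nonneg_eq_0_iff_AE f01 by blast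
  then show ?thesis
  proof (rule AE_mp[OF _ AE_I2], intro impI)
    fix \<omega> assume "f (G \<omega>) = 0"
    then have "infdist (G \<omega>) W = 0" by (simp add: f_def min_def split: if_splits)
    then show "G \<omega> \<in> W" using in_closure_iff_infdist_zero[OF W(2)] W(1) closure_closed by metis
  qed
qed

lemma conv_in_distr_continuous_map:
  fixes Z :: "nat \<Rightarrow> 'a \<Rightarrow> 'e::euclidean_space" and G :: "'b \<Rightarrow> 'e"
    and X :: "nat \<Rightarrow> 'a \<Rightarrow> real" and \<phi> :: "'e \<Rightarrow> real"
  assumes M: "prob_space M" and N: "prob_space N"
    and Zm: "\<And>n. Z n \<in> borel_measurable M" and Gm: "G \<in> borel_measurable N"
    and conv: "conv_in_distr M Z N G" and \<phi>: "continuous_on UNIV \<phi>"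
    and Xm: "\<And>n. X n \<in> borel_measurable M"
    and Bad: "\<And>n. Bad n \<in> sets M" "(\<lambda>n. measure M (Bad n)) \<longlonglongrightarrow> 0"
    and eq: "eventually (\<lambda>n. \<forall>\<omega>\<in>space M - Bad n. X n \<omega> = \<phi> (Z n \<omega>)) sequentially"
  shows "conv_in_distr M X N (\<lambda>\<omega>. \<phi> (G \<omega>))"
  unfolding conv_in_distr_def
proof (intro allI impI)
  interpret M: prob_space M by fact
  fix f :: "real \<Rightarrow> real" assume f: "continuous_on UNIV f \<and> bounded (range f)"
  then obtain K where K: "\<And>x. \<bar>f x\<bar> \<le> K" by (auto simp: bounded_iff)
  have fm: "f \<in> borel_measurable borel" using f borel_measurable_continuous_onI by blast
  have \<phi>m: "\<phi> \<in> borel_measurable borel" using \<phi> borel_measurable_continuous_onI by blast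
  have "continuous_on UNIV (\<lambda>g. f (\<phi> g))"
    using continuous_on_compose2[OF _ \<phi>, of UNIV f] f by auto
  moreover have "bounded (range (\<lambda>g. f (\<phi> g)))" using K unfolding bounded_iff by auto
  ultimately have lim: "(\<lambda>n. \<integral>\<omega>. f (\<phi> (Z n \<omega>)) \<partial>M) \<longlonglongrightarrow> (\<integral>\<omega>. f (\<phi> (G \<omega>)) \<partial>N)"
    using conv unfolding conv_in_distr_def by (elim allE[of _ "\<lambda>g. f (\<phi> g)"]) blast
  have int: "integrable M (\<lambda>\<omega>. f (X n \<omega>))" "integrable M (\<lambda>\<omega>. f (\<phi> (Z n \<omega>)))" for n
    using K by (auto intro!: M.integrable_bounded_real[of _ K] measurable_compose[OF Xm fm]
        measurable_compose[OF measurable_compose[OF Zm \<phi>m] fm])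
  have "(\<lambda>n. (\<integral>\<omega>. f (X n \<omega>) - f (\<phi> (Z n \<omega>)) \<partial>M)) \<longlonglongrightarrow> 0"
  proof (rule Lim_null_comparison)
    show "(\<lambda>n. 2 * K * measure M (Bad n)) \<longlonglongrightarrow> 0"
      using tendsto_mult_right_zero[OF Bad(2), of "2 * K"] by simp
    show "eventually (\<lambda>n. norm (\<integral>\<omega>. f (X n \<omega>) - f (\<phi> (Z n \<omega>)) \<partial>M)
        \<le> 2 * K * measure M (Bad n)) sequentially"
      using eq
    proof eventually_elim
      case (elim n)
      have "\<bar>f (X n \<omega>) - f (\<phi> (Z n \<omega>))\<bar> \<le> 2 * K" for \<omega>
        using K[of "X n \<omega>"] K[of "\<phi> (Z n \<omega>)"] by simp
      then show ?case
        using abs_integral_le_measure_exceptional[OF M _ Bad(1), of "\<lambda>\<omega>. f (X n \<omega>) - f (\<phi> (Z n \<omega>))"]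
          elim int by auto
    qed
  qed
  then have "(\<lambda>n. (\<integral>\<omega>. f (X n \<omega>) \<partial>M) - (\<integral>\<omega>. f (\<phi> (Z n \<omega>)) \<partial>M)) \<longlonglongrightarrow> 0"
    using int by simp
  from tendsto_add[OF this lim]
  show "(\<lambda>n. \<integral>\<omega>. f (X n \<omega>) \<partial>M) \<longlonglongrightarrow> (\<integral>\<omega>. f (\<phi> (G \<omega>)) \<partial>N)" by simp
qed

lemma conv_in_distr_scaled_dist_ge_tendsto_0:
  fixes X :: "nat \<Rightarrow> 'a \<Rightarrow> 'e::euclidean_space" and G :: "'b \<Rightarrow> 'e"
  assumes M: "prob_space M" and N: "prob_space N"
    and Xm: "\<And>n. X n \<in> borel_measurable M" and Gm: "G \<in> borel_measurable N"
    and conv: "conv_in_distr M (\<lambda>n \<omega>. r n *\<^sub>R (X n \<omega> - b)) N G"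
    and r: "filterlim r at_top sequentially" and \<delta>: "0 < \<delta>"
  shows "(\<lambda>n. measure M {\<omega>\<in>space M. \<delta> \<le> dist (X n \<omega>) b}) \<longlonglongrightarrow> 0"
proof (rule Lim_null_comparison)
  interpret M: prob_space M by fact
  have "filterlim (\<lambda>n. \<delta> * r n) at_top sequentially"
    by (rule filterlim_tendsto_pos_mult_at_top[OF tendsto_const \<delta> r])
  then show "(\<lambda>n. measure M {\<omega>\<in>space M. \<delta> * r n \<le> norm (r n *\<^sub>R (X n \<omega> - b))}) \<longlonglongrightarrow> 0"
    using Xm by (intro conv_in_distr_norm_ge_tendsto_0[OF M N _ Gm conv]) auto
  have "eventually (\<lambda>n. 0 < r n) sequentially" using r by (simp add: filterlim_at_top_dense)
  then show "eventually (\<lambda>n. norm (measure M {\<omega>\<in>space M. \<delta> \<le> dist (X n \<omega>) b})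
      \<le> measure M {\<omega>\<in>space M. \<delta> * r n \<le> norm (r n *\<^sub>R (X n \<omega> - b))}) sequentially"
  proof eventually_elim
    case (elim n)
    have "{\<omega>\<in>space M. \<delta> \<le> dist (X n \<omega>) b}
        \<subseteq> {\<omega>\<in>space M. \<delta> * r n \<le> norm (r n *\<^sub>R (X n \<omega> - b))}"
      using elim by (auto simp: dist_norm mult.commute intro: mult_left_mono)
    moreover have "{\<omega>\<in>space M. \<delta> * r n \<le> norm (r n *\<^sub>R (X n \<omega> - b))} \<in> sets M"
      using Xm[of n] by measurable
    ultimately show ?case by (simp add: M.finite_measure_mono)
  qed
qed

lemma measure_infeasible_or_far_tendsto_0:
  fixes A :: "real^'d^'m" and bn :: "nat \<Rightarrow> 'a \<Rightarrow> real^'m" and G :: "'b \<Rightarrow> real^'m"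
  assumes M: "prob_space M" and N: "prob_space N"
    and bn_meas: "\<And>n. bn n \<in> borel_measurable M" and G_meas: "G \<in> borel_measurable N"
    and l: "dual_feasible A c l" and r: "filterlim r at_top sequentially" and \<delta>: "0 < \<delta>"
    and conv: "conv_in_distr M (\<lambda>n \<omega>. r n *\<^sub>R (bn n \<omega> - b)) N G"
    and feasible: "(\<lambda>n. measure M {\<omega> \<in> space M. has_optimal A c (bn n \<omega>)}) \<longlonglongrightarrow> 1"
  shows "{\<omega>\<in>space M. \<not> (has_optimal A c (bn n \<omega>) \<and> dist (bn n \<omega>) b < \<delta>)} \<in> sets M"
    and "(\<lambda>n. measure M {\<omega>\<in>space M. \<not> (has_optimal A c (bn n \<omega>) \<and> dist (bn n \<omega>) b < \<delta>)}) \<longlonglongrightarrow> 0"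
proof -
  interpret M: prob_space M by fact
  define F where "F n = {\<omega>\<in>space M. \<not> has_optimal A c (bn n \<omega>)}" for n
  define D where "D n = {\<omega>\<in>space M. \<delta> \<le> dist (bn n \<omega>) b}" for n
  have opt_sets: "{\<omega>\<in>space M. has_optimal A c (bn n \<omega>)} \<in> sets M" for n
    using measurable_sets[OF bn_meas borel_closed[OF closed_has_optimal[OF l]]]
    by (simp add: vimage_def Int_def conj_commute)
  have F: "F n \<in> sets M" for n
    using opt_sets[of n] by (auto simp: F_def Collect_neg_eq Diff_eq[symmetric] intro: sets.Diff)
  have D: "D n \<in> sets M" for n unfolding D_def using bn_meas[of n] by measurable
  have eq: "{\<omega>\<in>space M. \<not> (has_optimal A c (bn n \<omega>) \<and> dist (bn n \<omega>) b < \<delta>)} = F n \<union> D n" for n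
    by (auto simp: F_def D_def)
  then show "{\<omega>\<in>space M. \<not> (has_optimal A c (bn n \<omega>) \<and> dist (bn n \<omega>) b < \<delta>)} \<in> sets M"
    using F D by simp
  have "measure M (F n) = 1 - measure M {\<omega> \<in> space M. has_optimal A c (bn n \<omega>)}" for n
    using M.prob_compl[OF opt_sets[of n]] by (simp add: F_def set_diff_eq cong: conj_cong)
  then have "(\<lambda>n. measure M (F n)) \<longlonglongrightarrow> 0"
    using tendsto_diff[OF tendsto_const feasible, of 1] by simp
  moreover have "(\<lambda>n. measure M (D n)) \<longlonglongrightarrow> 0"
    unfolding D_def by (rule conv_in_distr_scaled_dist_ge_tendsto_0[OF M N bn_meas G_meas conv r \<delta>])
  ultimately have lim: "(\<lambda>n. measure M (F n) + measure M (D n)) \<longlonglongrightarrow> 0"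
    by (rule tendsto_add_zero)
  show "(\<lambda>n. measure M {\<omega>\<in>space M. \<not> (has_optimal A c (bn n \<omega>) \<and> dist (bn n \<omega>) b < \<delta>)})
      \<longlonglongrightarrow> 0"
    unfolding eq
  proof (rule Lim_null_comparison[OF _ lim])
    show "eventually (\<lambda>n. norm (measure M (F n \<union> D n)) \<le> measure M (F n) + measure M (D n)) sequentially"
      using measure_Un_le[OF F D] by simp
  qed
qed

lemma opt_value_expansion_with_high_probability:
  fixes A :: "real^'d^'m" and bn :: "nat \<Rightarrow> 'a \<Rightarrow> real^'m" and G :: "'b \<Rightarrow> real^'m"
  assumes full: "rank A = CARD('m)" and opt: "primal_optimal A c b xs"
    and M: "prob_space M" and N: "prob_space N"
    and bn_meas: "\<And>n. bn n \<in> borel_measurable M" and G_meas: "G \<in> borel_measurable N"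
    and r: "filterlim r at_top sequentially"
    and conv: "conv_in_distr M (\<lambda>n \<omega>. r n *\<^sub>R (bn n \<omega> - b)) N G"
    and feasible: "(\<lambda>n. measure M {\<omega> \<in> space M. has_optimal A c (bn n \<omega>)}) \<longlonglongrightarrow> 1"
  obtains Bad where "\<And>n. Bad n \<in> sets M" "(\<lambda>n. measure M (Bad n)) \<longlonglongrightarrow> 0"
    "eventually (\<lambda>n. \<forall>\<omega>\<in>space M - Bad n.
       r n * (opt_value A c (bn n \<omega>) - opt_value A c b) = max_optimal_dual A b c (r n *\<^sub>R (bn n \<omega> - b)) \<and>
       r n *\<^sub>R (bn n \<omega> - b) \<in> {g. \<forall>l. dual_optimal A c b l \<longrightarrow> g \<bullet> l \<le> max_optimal_dual A b c g})
     sequentially"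
proof -
  obtain l0 where l0: "dual_feasible A c l0" by (rule exists_dual_feasible[OF opt])
  obtain \<delta> where \<delta>: "0 < \<delta>" and near: "\<And>\<beta>. dist \<beta> b < \<delta> \<Longrightarrow> has_optimal A c \<beta> \<Longrightarrow> \<forall>r\<ge>0.
      r * (opt_value A c \<beta> - opt_value A c b) = max_optimal_dual A b c (r *\<^sub>R (\<beta> - b)) \<and>
      (\<forall>l. dual_optimal A c b l \<longrightarrow> (r *\<^sub>R (\<beta> - b)) \<bullet> l \<le> max_optimal_dual A b c (r *\<^sub>R (\<beta> - b)))"
    using opt_value_local_expansion[OF full opt] unfolding eventually_nhds_metric
    by (auto simp: dist_commute)
  define Bad where "Bad n = {\<omega>\<in>space M. \<not> (has_optimal A c (bn n \<omega>) \<and> dist (bn n \<omega>) b < \<delta>)}" for n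
  have "eventually (\<lambda>n. 0 < r n) sequentially" using r by (simp add: filterlim_at_top_dense)
  then have "eventually (\<lambda>n. \<forall>\<omega>\<in>space M - Bad n.
       r n * (opt_value A c (bn n \<omega>) - opt_value A c b) = max_optimal_dual A b c (r n *\<^sub>R (bn n \<omega> - b)) \<and>
       r n *\<^sub>R (bn n \<omega> - b) \<in> {g. \<forall>l. dual_optimal A c b l \<longrightarrow> g \<bullet> l \<le> max_optimal_dual A b c g})
     sequentially"
    by (rule eventually_mono) (auto simp: Bad_def dest!: near)
  then show thesis
    using measure_infeasible_or_far_tendsto_0[OF M N bn_meas G_meas l0 r \<delta> conv feasible]
    by (intro that[of Bad]) (simp_all add: Bad_def)
qed

theorem proposition3p5:
  fixes A :: "real^'d^'m" and b :: "real^'m" and c :: "real^'d"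
    and M :: "'a measure" and N :: "'b measure"
    and bn :: "nat \<Rightarrow> 'a \<Rightarrow> real^'m" and r :: "nat \<Rightarrow> real"
    and S :: "'m set" and G :: "'b \<Rightarrow> real^'m"
  assumes full_rank: "rank A = CARD('m)"
    and A1: "\<exists>x. primal_optimal A c b x" "bounded {x. primal_optimal A c b x}"
    and M: "prob_space M" and N: "prob_space N"
    and r: "filterlim r at_top sequentially"
    and S: "S \<noteq> {}"
    and bn_meas: "\<And>n. bn n \<in> borel_measurable M"
    and bn_fixed: "\<And>n \<omega> i. \<omega> \<in> space M \<Longrightarrow> i \<notin> S \<Longrightarrow> bn n \<omega> $ i = b $ i"
    and G_meas: "G \<in> borel_measurable N"
    and G_zero: "\<And>\<omega> i. \<omega> \<in> space N \<Longrightarrow> i \<notin> S \<Longrightarrow> G \<omega> $ i = 0"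
    and G_ac: "absolutely_continuous (PiM S (\<lambda>_. lborel))
                 (distr N (PiM S (\<lambda>_. lborel)) (\<lambda>\<omega>. restrict (\<lambda>i. G \<omega> $ i) S))"
    and B1: "conv_in_distr M (\<lambda>n \<omega>. r n *\<^sub>R (bn n \<omega> - b)) N G"
    and B2: "(\<lambda>n. measure M {\<omega> \<in> space M. has_optimal A c (bn n \<omega>)}) \<longlonglongrightarrow> 1"
  shows "conv_in_distr M (\<lambda>n \<omega>. r n * (opt_value A c (bn n \<omega>) - opt_value A c b)) N
           (\<lambda>\<omega>. Max {G \<omega> \<bullet> basic_dual A c I | I. I \<in> optimal_bases A b c})
       \<and> (AE \<omega> in N. ereal (Max {G \<omega> \<bullet> basic_dual A c I | I. I \<in> optimal_bases A b c})
             = (SUP l \<in> {l. dual_optimal A c b l}. ereal (G \<omega> \<bullet> l)))"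
proof -
  obtain xs where opt: "primal_optimal A c b xs" using A1(1) by blast
  obtain l0 where l0: "dual_feasible A c l0" by (rule exists_dual_feasible[OF opt])
  have ne: "optimal_bases A b c \<noteq> {}" by (rule optimal_bases_nonempty[OF full_rank opt])
  let ?\<psi> = "max_optimal_dual A b c"
  let ?X = "\<lambda>n \<omega>. r n * (opt_value A c (bn n \<omega>) - opt_value A c b)"
  let ?Z = "\<lambda>n \<omega>. r n *\<^sub>R (bn n \<omega> - b)"
  let ?W = "{g. \<forall>l. dual_optimal A c b l \<longrightarrow> g \<bullet> l \<le> ?\<psi> g}"
  obtain Bad where Bad: "\<And>n. Bad n \<in> sets M" "(\<lambda>n. measure M (Bad n)) \<longlonglongrightarrow> 0"
    and good: "eventually (\<lambda>n. \<forall>\<omega>\<in>space M - Bad n. ?X n \<omega> = ?\<psi> (?Z n \<omega>) \<and> ?Z n \<omega> \<in> ?W) sequentially"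
    by (rule opt_value_expansion_with_high_probability[OF full_rank opt M N bn_meas G_meas r B1 B2]) blast
  have Zm: "?Z n \<in> borel_measurable M" for n using bn_meas[of n] by measurable
  have Xm: "?X n \<in> borel_measurable M" for n
    using measurable_compose[OF bn_meas borel_measurable_opt_value[OF full_rank l0]] by measurable
  have "conv_in_distr M ?X N (\<lambda>\<omega>. ?\<psi> (G \<omega>))"
    using good
    by (intro conv_in_distr_continuous_map[OF M N Zm G_meas B1 continuous_on_max_optimal_dual Xm Bad])
      (auto elim: eventually_mono)
  moreover have "AE \<omega> in N. G \<omega> \<in> ?W"
    using good max_optimal_dual_scaleR[OF ne, of 0]
    by (intro conv_in_distr_AE_closed[OF M N Zm G_meas B1 closed_dual_optimal_dominated _ Bad])
      (auto elim: eventually_mono intro!: exI[of _ 0])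
  ultimately show ?thesis
    using max_optimal_dual_eq_SUP[OF ne]
    by (auto simp: max_optimal_dual_def setcompr_eq_image elim: AE_mp[OF _ AE_I2])
qed

end
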